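(* Let $n>2$ be odd, let $\zeta\in\bar{\mathbb Q}$ be a primitive $n$-th root of unity, let $c$ be a positive rational number such that $x^n-c$ is irreducible over $\mathbb Q$, and let $a=c^{1/n}$ be the positive real root of $x^n-c$. Let $l$ be a positive divisor of $n$, $L=\mathbb Q(a)$ and $M=\mathbb Q(a,\zeta^l)$. Then $\rho_{\mathbb Q}(M,L)=n/l$ and $\tau_{\mathbb Q}(M,L)=l$; in particular $\tau_{\mathbb Q}(M,L)\,\rho_{\mathbb Q}(M,L)=[L:\mathbb Q]$.
   Context: For finite extensions $L/K$, $M/K$ inside a fixed algebraic closure: writing $L=K(\alpha)$ with minimal polynomial $f$ of $\alpha$ over $K$, the root capacity $\rho_K(M,L)$ is the number of roots of $f$ lying in $M$ (independent of the choice of $\alpha$). If $L_1,\dots,L_a$ are all the distinct subfields of $M$ isomorphic to $L$ over $K$, the intersection indicium is $\tau_K(M,L)=[L_1\cap\cdots\cap L_a:K]$ if $a\ge1$ and $0$ if $a=0$. *)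

theory Defs
  imports Complex_Main "HOL-Computational_Algebra.Polynomial"
begin

text \<open>The fixed algebraic closure of Q is realised inside the complex numbers.
  Subfields of C (they automatically contain Q).\<close>

definition subfield_C :: "complex set \<Rightarrow> bool" where
  "subfield_C F \<longleftrightarrow> 0 \<in> F \<and> 1 \<in> F \<and>
     (\<forall>x\<in>F. \<forall>y\<in>F. x + y \<in> F \<and> x * y \<in> F) \<and>
     (\<forall>x\<in>F. - x \<in> F) \<and> (\<forall>x\<in>F. x \<noteq> 0 \<longrightarrow> inverse x \<in> F)"

definition gen_field :: "complex set \<Rightarrow> complex set" where
  "gen_field S = \<Inter> {F. subfield_C F \<and> S \<subseteq> F}"

text \<open>Degree [F:Q] = dimension of F as a Q-vector space (0 if not finite-dimensional).\<close>
definition rat_indep :: "complex set \<Rightarrow> bool" where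
  "rat_indep B \<longleftrightarrow> (\<forall>c :: complex \<Rightarrow> rat.
      (\<Sum>b\<in>B. of_rat (c b) * b) = 0 \<longrightarrow> (\<forall>b\<in>B. c b = 0))"

definition rat_basis :: "complex set \<Rightarrow> complex set \<Rightarrow> bool" where
  "rat_basis F B \<longleftrightarrow> finite B \<and> B \<subseteq> F \<and> rat_indep B \<and>
      (\<forall>x\<in>F. \<exists>c :: complex \<Rightarrow> rat. x = (\<Sum>b\<in>B. of_rat (c b) * b))"

definition ext_degree :: "complex set \<Rightarrow> nat" where
  "ext_degree F = (if \<exists>B. rat_basis F B then card (SOME B. rat_basis F B) else 0)"

definition min_poly :: "complex \<Rightarrow> rat poly" where
  "min_poly \<alpha> = (SOME p. p \<noteq> 0 \<and> lead_coeff p = 1 \<and> poly (map_poly of_rat p) \<alpha> = 0 \<and>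
       (\<forall>q. q \<noteq> 0 \<and> poly (map_poly of_rat q) \<alpha> = 0 \<longrightarrow> degree p \<le> degree q))"

definition root_capacity :: "complex set \<Rightarrow> complex set \<Rightarrow> nat" where
  "root_capacity M L =
     (let \<alpha> = (SOME \<alpha>. L = gen_field {\<alpha>})
      in card {x \<in> M. poly (map_poly of_rat (min_poly \<alpha>)) x = 0})"

definition iso_over_Q :: "complex set \<Rightarrow> complex set \<Rightarrow> bool" where
  "iso_over_Q L L' \<longleftrightarrow> (\<exists>\<phi>. bij_betw \<phi> L L' \<and>
      (\<forall>x\<in>L. \<forall>y\<in>L. \<phi> (x + y) = \<phi> x + \<phi> y \<and> \<phi> (x * y) = \<phi> x * \<phi> y) \<and>
      (\<forall>r. \<phi> (of_rat r) = of_rat r))"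

definition intersection_indicium :: "complex set \<Rightarrow> complex set \<Rightarrow> nat" where
  "intersection_indicium M L =
     (let Ls = {L'. subfield_C L' \<and> L' \<subseteq> M \<and> iso_over_Q L L'}
      in if Ls = {} then 0 else ext_degree (\<Inter> Ls))"

end

theory Submission
  imports Defs "HOL-Computational_Algebra.Fundamental_Theorem_Algebra"
    "HOL-Computational_Algebra.Polynomial_Factorial" "HOL-Computational_Algebra.Field_as_Ring"
begin

text \<open>Write \<open>m = n / l\<close> and \<open>\<omega> = \<zeta>\<^sup>l\<close>, a primitive \<open>m\<close>-th root of unity.  The key fact is that
  \<open>x\<^sup>n - c\<close> remains irreducible over \<open>\<rat>(\<zeta>)\<close>, i.e. \<open>1, a, \<dots>, a\<^sup>n\<^sup>-\<^sup>1\<close> are linearly independent over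
  \<open>\<rat>(\<zeta>)\<close>.  Hence every element of \<open>M = \<rat>(a, \<omega>)\<close> is a sum \<open>\<Sum> f\<^sub>i a\<^sup>i\<close> with \<open>f\<^sub>i \<in> \<rat>(\<omega>)\<close>, and a
  root \<open>a \<zeta>\<^sup>k\<close> of \<open>x\<^sup>n - c\<close> lies in \<open>M\<close> only if \<open>\<zeta>\<^sup>k \<in> \<rat>(\<zeta>\<^sup>l)\<close>, which by a cyclotomic argument
  forces \<open>l dvd k\<close>.  So the roots of \<open>x\<^sup>n - c\<close> in \<open>M\<close> are the \<open>m\<close> numbers \<open>a \<omega>\<^sup>j\<close>: this gives
  \<open>\<rho> = m\<close>, and the conjugates of \<open>L = \<rat>(a)\<close> inside \<open>M\<close> are the fields \<open>\<rat>(a \<omega>\<^sup>j)\<close>.  Comparing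
  the coefficients of an element of \<open>\<rat>(a) \<inter> \<rat>(a \<omega>)\<close> in the bases \<open>a\<^sup>i\<close> and \<open>(a \<omega>)\<^sup>i\<close> shows that
  only the powers \<open>a\<^sup>m\<^sup>i\<close> occur, so the intersection of the conjugates is \<open>\<rat>(a\<^sup>m)\<close>, of degree \<open>l\<close>.\<close>

abbreviation of_rat_poly :: "rat poly \<Rightarrow> complex poly" where
  "of_rat_poly \<equiv> map_poly of_rat"

lemma coeff_of_rat_poly [simp]: "coeff (of_rat_poly p) i = of_rat (coeff p i)"
  by (simp add: coeff_map_poly)

lemma of_rat_poly_add [simp]: "of_rat_poly (p + q) = of_rat_poly p + of_rat_poly q"
  by (rule poly_eqI) (simp add: of_rat_add)

lemma of_rat_poly_diff [simp]: "of_rat_poly (p - q) = of_rat_poly p - of_rat_poly q"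
  by (rule poly_eqI) (simp add: of_rat_diff)

lemma of_rat_poly_smult [simp]: "of_rat_poly (smult r p) = smult (of_rat r) (of_rat_poly p)"
  by (rule poly_eqI) (simp add: of_rat_mult)

lemma of_rat_poly_pCons [simp]: "of_rat_poly (pCons r p) = pCons (of_rat r) (of_rat_poly p)"
  by (simp add: map_poly_pCons)

lemma of_rat_poly_monom [simp]: "of_rat_poly (monom r k) = monom (of_rat r) k"
  by (simp add: map_poly_monom)

lemma of_rat_poly_mult [simp]: "of_rat_poly (p * q) = of_rat_poly p * of_rat_poly q"
  by (induction p) (simp_all add: algebra_simps)

lemma of_rat_poly_power [simp]: "of_rat_poly (p ^ k) = of_rat_poly p ^ k"
  by (induction k) simp_all

lemma of_rat_poly_pcompose [simp]:
  "of_rat_poly (pcompose p q) = pcompose (of_rat_poly p) (of_rat_poly q)"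
  by (induction p) (simp_all add: pcompose_pCons)

lemma of_rat_poly_sum [simp]: "of_rat_poly (sum f A) = (\<Sum>x\<in>A. of_rat_poly (f x))"
  by (induction A rule: infinite_finite_induct) simp_all

lemma of_rat_poly_eq_iff [simp]: "of_rat_poly p = of_rat_poly q \<longleftrightarrow> p = q"
  by (auto simp: poly_eq_iff)

lemma of_rat_poly_eq_0_iff [simp]: "of_rat_poly p = 0 \<longleftrightarrow> p = 0"
  using of_rat_poly_eq_iff[of p 0] by simp

lemma degree_of_rat_poly [simp]: "degree (of_rat_poly p) = degree p"
  by (simp add: degree_map_poly)

lemma of_real_of_rat [simp]: "of_real (of_rat r :: real) = (of_rat r :: complex)"
  by (cases r) (simp add: of_rat_rat)

lemma cnj_of_rat [simp]: "cnj (of_rat r) = of_rat r"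
  by (cases r) (simp add: of_rat_rat)

lemma poly_of_rat_poly_cnj: "poly (of_rat_poly p) (cnj x) = cnj (poly (of_rat_poly p) x)"
  by (induction p) auto

lemma degree_monom_minus_const:
  "n > 0 \<Longrightarrow> degree (monom (1::'a::comm_ring_1) n - [:r:]) = n"
proof -
  assume n: "n > 0"
  have "coeff (monom (1::'a) n - [:r:]) i = 0" if "i > n" for i
    using that by (cases i) simp_all
  moreover have "coeff (monom (1::'a) n - [:r:]) n = 1" using n by (cases n) simp_all
  ultimately show ?thesis
    by (intro order.antisym degree_le le_degree) auto
qed

lemma poly_eq_sum_below_degree:
  fixes p :: "'a :: comm_semiring_1 poly"
  assumes "degree p < d \<or> p = 0"
  shows "poly p x = (\<Sum>i<d. coeff p i * x ^ i)"
proof (cases "p = 0")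
  case False
  have "poly p x = (\<Sum>i\<le>degree p. coeff p i * x ^ i)" by (rule poly_altdef)
  also have "\<dots> = (\<Sum>i<d. coeff p i * x ^ i)"
    using assms False by (intro sum.mono_neutral_left) (auto simp: coeff_eq_0)
  finally show ?thesis .
qed simp

lemma algebraic_iff_rat_poly:
  "algebraic (x :: complex) \<longleftrightarrow> (\<exists>p. p \<noteq> 0 \<and> poly (of_rat_poly p) x = 0)"
proof
  assume "algebraic x"
  then obtain p where "p \<noteq> 0" "poly (map_poly of_int p) x = 0" by (elim algebraicE')
  moreover have "map_poly of_int p = of_rat_poly (map_poly of_int p)"
    by (rule poly_eqI) (simp add: coeff_map_poly)
  moreover have "map_poly (of_int :: int \<Rightarrow> rat) p \<noteq> 0" using \<open>p \<noteq> 0\<close>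
    by (auto simp: poly_eq_iff coeff_map_poly)
  ultimately show "\<exists>p. p \<noteq> 0 \<and> poly (of_rat_poly p) x = 0" by metis
next
  assume "\<exists>p. p \<noteq> 0 \<and> poly (of_rat_poly p) x = 0"
  then show "algebraic x" by (auto intro!: algebraicI'[of "of_rat_poly _"])
qed

lemma subfield_C_zero: "subfield_C F \<Longrightarrow> 0 \<in> F"
  and subfield_C_one: "subfield_C F \<Longrightarrow> 1 \<in> F"
  and subfield_C_add: "subfield_C F \<Longrightarrow> x \<in> F \<Longrightarrow> y \<in> F \<Longrightarrow> x + y \<in> F"
  and subfield_C_mult: "subfield_C F \<Longrightarrow> x \<in> F \<Longrightarrow> y \<in> F \<Longrightarrow> x * y \<in> F"
  and subfield_C_uminus: "subfield_C F \<Longrightarrow> x \<in> F \<Longrightarrow> - x \<in> F"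
  by (simp_all add: subfield_C_def)

lemma subfield_C_inverse: "subfield_C F \<Longrightarrow> x \<in> F \<Longrightarrow> inverse x \<in> F"
  by (cases "x = 0") (auto simp add: subfield_C_def)

lemma subfield_C_diff: "subfield_C F \<Longrightarrow> x \<in> F \<Longrightarrow> y \<in> F \<Longrightarrow> x - y \<in> F"
  using subfield_C_add[of F x "- y"] subfield_C_uminus[of F y] by simp

lemma subfield_C_divide: "subfield_C F \<Longrightarrow> x \<in> F \<Longrightarrow> y \<in> F \<Longrightarrow> x / y \<in> F"
  by (simp add: divide_inverse subfield_C_mult subfield_C_inverse)

lemma subfield_C_power: "subfield_C F \<Longrightarrow> x \<in> F \<Longrightarrow> x ^ k \<in> F"
  by (induction k) (auto intro: subfield_C_one subfield_C_mult)

lemma subfield_C_of_nat: "subfield_C F \<Longrightarrow> of_nat k \<in> F"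
  by (induction k) (auto intro: subfield_C_zero subfield_C_one subfield_C_add)

lemma subfield_C_of_int:
  assumes F: "subfield_C F"
  shows "of_int k \<in> F"
proof (cases "k \<ge> 0")
  case True
  then show ?thesis using subfield_C_of_nat[OF F, of "nat k"] by simp
next
  case False
  then show ?thesis using subfield_C_uminus[OF F subfield_C_of_nat[OF F, of "nat (- k)"]] by simp
qed

lemma subfield_C_of_rat: "subfield_C F \<Longrightarrow> of_rat r \<in> F"
proof -
  assume F: "subfield_C F"
  obtain a b where "r = Rat.Fract a b" "b \<noteq> 0" by (cases r) auto
  then have "of_rat r = (of_int a / of_int b :: complex)" by (simp add: of_rat_rat)
  then show ?thesis using subfield_C_divide[OF F subfield_C_of_int[OF F] subfield_C_of_int[OF F]] by simp
qed

lemma subfield_C_sum: "subfield_C F \<Longrightarrow> (\<And>i. i \<in> A \<Longrightarrow> f i \<in> F) \<Longrightarrow> sum f A \<in> F"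
  by (induction A rule: infinite_finite_induct) (auto intro: subfield_C_zero subfield_C_add)

lemma subfield_C_poly: "subfield_C F \<Longrightarrow> x \<in> F \<Longrightarrow> poly (of_rat_poly p) x \<in> F"
  by (induction p) (auto intro: subfield_C_add subfield_C_mult subfield_C_of_rat subfield_C_zero)

lemma subfield_C_power_gcd:
  assumes F: "subfield_C F" and x: "x \<noteq> 0" "x ^ i \<in> F" "x ^ j \<in> F"
  shows "x ^ gcd i j \<in> F"
proof (cases "i = 0")
  case True
  then show ?thesis using x by simp
next
  case False
  obtain u v where uv: "i * u = j * v + gcd i j" using bezout_nat[OF False, of j] by auto
  have "(x ^ i) ^ u = (x ^ j) ^ v * x ^ gcd i j" by (simp flip: power_mult power_add add: uv)
  then have "x ^ gcd i j = (x ^ i) ^ u * inverse ((x ^ j) ^ v)" using x by (simp add: field_simps)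
  then show ?thesis using F x by (simp add: subfield_C_mult subfield_C_inverse subfield_C_power)
qed

lemma gen_field_subfield: "subfield_C (gen_field S)"
  unfolding gen_field_def subfield_C_def by blast

lemma gen_field_superset: "S \<subseteq> gen_field S"
  unfolding gen_field_def by blast

lemma gen_field_least: "subfield_C F \<Longrightarrow> S \<subseteq> F \<Longrightarrow> gen_field S \<subseteq> F"
  unfolding gen_field_def by blast

section \<open>The ring \<open>\<rat>[\<alpha>]\<close>\<close>

definition Q_adjoin :: "complex \<Rightarrow> complex set" where
  "Q_adjoin \<alpha> = range (\<lambda>p. poly (of_rat_poly p) \<alpha>)"

lemma Q_adjoin_poly [intro]: "poly (of_rat_poly p) \<alpha> \<in> Q_adjoin \<alpha>"
  unfolding Q_adjoin_def by auto

lemma Q_adjoinE: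
  assumes "x \<in> Q_adjoin \<alpha>"
  obtains p where "x = poly (of_rat_poly p) \<alpha>"
  using assms unfolding Q_adjoin_def by auto

lemma Q_adjoin_self [intro]: "\<alpha> \<in> Q_adjoin \<alpha>"
  using Q_adjoin_poly[of "[:0, 1:]" \<alpha>] by simp

lemma Q_adjoin_power [intro]: "\<alpha> ^ k \<in> Q_adjoin \<alpha>"
  using Q_adjoin_poly[of "monom 1 k" \<alpha>] by (simp add: poly_monom)

lemma Q_adjoin_of_rat [intro]: "of_rat r \<in> Q_adjoin \<alpha>"
  using Q_adjoin_poly[of "[:r:]" \<alpha>] by simp

lemma Q_adjoin_zero [intro]: "0 \<in> Q_adjoin \<alpha>"
  using Q_adjoin_of_rat[of 0] by simp

lemma Q_adjoin_add: "x \<in> Q_adjoin \<alpha> \<Longrightarrow> y \<in> Q_adjoin \<alpha> \<Longrightarrow> x + y \<in> Q_adjoin \<alpha>"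
  and Q_adjoin_diff: "x \<in> Q_adjoin \<alpha> \<Longrightarrow> y \<in> Q_adjoin \<alpha> \<Longrightarrow> x - y \<in> Q_adjoin \<alpha>"
  and Q_adjoin_mult: "x \<in> Q_adjoin \<alpha> \<Longrightarrow> y \<in> Q_adjoin \<alpha> \<Longrightarrow> x * y \<in> Q_adjoin \<alpha>"
proof -
  assume "x \<in> Q_adjoin \<alpha>" "y \<in> Q_adjoin \<alpha>"
  then obtain p q where "x = poly (of_rat_poly p) \<alpha>" "y = poly (of_rat_poly q) \<alpha>"
    by (elim Q_adjoinE)
  moreover have "poly (of_rat_poly (p + q)) \<alpha> \<in> Q_adjoin \<alpha>"
    "poly (of_rat_poly (p - q)) \<alpha> \<in> Q_adjoin \<alpha>" "poly (of_rat_poly (p * q)) \<alpha> \<in> Q_adjoin \<alpha>"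
    by (rule Q_adjoin_poly)+
  ultimately show "x + y \<in> Q_adjoin \<alpha>" "x - y \<in> Q_adjoin \<alpha>" "x * y \<in> Q_adjoin \<alpha>" by simp_all
qed

lemma Q_adjoin_power_subset: "Q_adjoin (\<alpha> ^ k) \<subseteq> Q_adjoin \<alpha>"
proof
  fix x assume "x \<in> Q_adjoin (\<alpha> ^ k)"
  then obtain p where "x = poly (of_rat_poly p) (\<alpha> ^ k)" by (rule Q_adjoinE)
  moreover have "poly (of_rat_poly (pcompose p (monom 1 k))) \<alpha> \<in> Q_adjoin \<alpha>" ..
  ultimately show "x \<in> Q_adjoin \<alpha>" by (simp add: poly_pcompose poly_monom)
qed

lemma Q_adjoin_subset_subfield: "subfield_C F \<Longrightarrow> \<alpha> \<in> F \<Longrightarrow> Q_adjoin \<alpha> \<subseteq> F"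
  unfolding Q_adjoin_def by (auto intro: subfield_C_poly)

lemma irreducible_degree_pos: "irreducible (P :: 'a :: field poly) \<Longrightarrow> degree P > 0"
  using is_unit_iff_degree[of P] by (auto simp: irreducible_def)

lemma irreducible_bezout_one:
  fixes X p :: "rat poly"
  assumes "irreducible X" "\<not> X dvd p"
  obtains u v where "u * X + v * p = 1"
proof -
  have "coprime X p"
    using field_poly_irreducible_imp_prime[OF assms(1)] prime_elem_imp_coprime assms(2) by blast
  obtain u v where "bezout_coefficients X p = (u, v)" by (cases "bezout_coefficients X p")
  then have "u * X + v * p = gcd X p" by (rule bezout_coefficients)
  also have "gcd X p = 1" using \<open>coprime X p\<close> by simp
  finally show thesis by (rule that)
qed

lemma irreducible_root_dvd_iff:
  assumes irr: "irreducible X" and root: "poly (of_rat_poly X) \<alpha> = 0"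
  shows "poly (of_rat_poly p) \<alpha> = 0 \<longleftrightarrow> X dvd p"
proof
  assume p: "poly (of_rat_poly p) \<alpha> = 0"
  show "X dvd p"
  proof (rule ccontr)
    assume "\<not> X dvd p"
    then obtain u v where "u * X + v * p = 1" by (rule irreducible_bezout_one[OF irr])
    then have "poly (of_rat_poly (u * X + v * p)) \<alpha> = 1" by simp
    then show False using root p by simp
  qed
next
  assume "X dvd p"
  then obtain k where "p = X * k" by (elim dvdE)
  then show "poly (of_rat_poly p) \<alpha> = 0" using root by simp
qed

lemma conjugate_root:
  assumes "irreducible X" "poly (of_rat_poly X) \<alpha> = 0" "poly (of_rat_poly X) \<beta> = 0"
    and "poly (of_rat_poly p) \<alpha> = 0"
  shows "poly (of_rat_poly p) \<beta> = 0"
  using assms irreducible_root_dvd_iff by blast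

lemma Q_adjoin_subfield:
  assumes irr: "irreducible X" and root: "poly (of_rat_poly X) \<alpha> = 0"
  shows "subfield_C (Q_adjoin \<alpha>)"
  unfolding subfield_C_def
proof (intro conjI ballI impI)
  show "0 \<in> Q_adjoin \<alpha>" "1 \<in> Q_adjoin \<alpha>" using Q_adjoin_of_rat[of 1] by auto
  fix x assume x: "x \<in> Q_adjoin \<alpha>"
  show "- x \<in> Q_adjoin \<alpha>" using Q_adjoin_diff[OF Q_adjoin_zero x] by simp
  show "x + y \<in> Q_adjoin \<alpha>" "x * y \<in> Q_adjoin \<alpha>" if "y \<in> Q_adjoin \<alpha>" for y
    using x that by (simp_all add: Q_adjoin_add Q_adjoin_mult)
  obtain p where p: "x = poly (of_rat_poly p) \<alpha>" using x by (rule Q_adjoinE)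
  assume "x \<noteq> 0"
  then have "\<not> X dvd p" using irreducible_root_dvd_iff[OF irr root, of p] p by simp
  then obtain u v where "u * X + v * p = 1" by (rule irreducible_bezout_one[OF irr])
  then have "poly (of_rat_poly (u * X + v * p)) \<alpha> = 1" by simp
  then have "x * poly (of_rat_poly v) \<alpha> = 1" using root p by (simp add: mult.commute)
  then show "inverse x \<in> Q_adjoin \<alpha>" by (simp add: inverse_unique Q_adjoin_poly)
qed

lemma gen_field_singleton:
  assumes "irreducible X" "poly (of_rat_poly X) \<alpha> = 0"
  shows "gen_field {\<alpha>} = Q_adjoin \<alpha>"
proof
  show "gen_field {\<alpha>} \<subseteq> Q_adjoin \<alpha>"
    by (rule gen_field_least[OF Q_adjoin_subfield[OF assms]]) auto
  show "Q_adjoin \<alpha> \<subseteq> gen_field {\<alpha>}"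
    by (rule Q_adjoin_subset_subfield[OF gen_field_subfield]) (use gen_field_superset in blast)
qed

lemma min_poly_exists:
  assumes "algebraic \<alpha>"
  shows "\<exists>P. P \<noteq> 0 \<and> lead_coeff P = 1 \<and> poly (of_rat_poly P) \<alpha> = 0 \<and>
       (\<forall>q. q \<noteq> 0 \<and> poly (of_rat_poly q) \<alpha> = 0 \<longrightarrow> degree P \<le> degree q)"
proof -
  define R where "R = {q. q \<noteq> 0 \<and> poly (of_rat_poly q) \<alpha> = 0}"
  obtain p where "p \<in> R" using assms by (auto simp: R_def algebraic_iff_rat_poly)
  then obtain q where q: "q \<in> R" and least: "\<And>r. r \<in> R \<Longrightarrow> degree q \<le> degree r"
    using arg_min_nat_lemma[of "\<lambda>q. q \<in> R" p degree] by blast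
  define P where "P = smult (inverse (lead_coeff q)) q"
  have "P \<noteq> 0" "lead_coeff P = 1" "poly (of_rat_poly P) \<alpha> = 0" "degree P = degree q"
    using q by (auto simp: P_def R_def)
  moreover have "degree q \<le> degree r" if "r \<noteq> 0" "poly (of_rat_poly r) \<alpha> = 0" for r
    using least that by (simp add: R_def)
  ultimately show ?thesis by metis
qed

lemma min_poly_props:
  assumes "algebraic \<alpha>"
  shows "min_poly \<alpha> \<noteq> 0" "lead_coeff (min_poly \<alpha>) = 1"
    "poly (of_rat_poly (min_poly \<alpha>)) \<alpha> = 0"
    "\<And>q. q \<noteq> 0 \<Longrightarrow> poly (of_rat_poly q) \<alpha> = 0 \<Longrightarrow> degree (min_poly \<alpha>) \<le> degree q"
  using someI_ex[OF min_poly_exists[OF assms]] unfolding min_poly_def by blast+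

lemma min_poly_irreducible:
  assumes "algebraic \<alpha>"
  shows "irreducible (min_poly \<alpha>)"
proof -
  note P = min_poly_props[OF assms]
  have "degree (min_poly \<alpha>) \<noteq> 0"
  proof
    assume "degree (min_poly \<alpha>) = 0"
    then obtain r where "min_poly \<alpha> = [:r:]" by (elim degree_eq_zeroE)
    then show False using P(1,3) by simp
  qed
  then show ?thesis
  proof (intro irreducibleI P(1))
    fix a b assume ab: "min_poly \<alpha> = a * b"
    then have a0: "a \<noteq> 0" and b0: "b \<noteq> 0" using P(1) by auto
    have dab: "degree (min_poly \<alpha>) = degree a + degree b" using ab a0 b0 by (simp add: degree_mult_eq)
    have "poly (of_rat_poly a) \<alpha> = 0 \<or> poly (of_rat_poly b) \<alpha> = 0"
      using ab P(3) by simp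
    then have "degree a = 0 \<or> degree b = 0"
      using P(4)[OF a0] P(4)[OF b0] dab by linarith
    then show "is_unit a \<or> is_unit b"
      using is_unit_iff_degree[OF a0] is_unit_iff_degree[OF b0] by blast
  qed (simp add: is_unit_iff_degree P(1))
qed

lemma min_poly_dvd:
  assumes "algebraic \<alpha>" "poly (of_rat_poly q) \<alpha> = 0"
  shows "min_poly \<alpha> dvd q"
  using irreducible_root_dvd_iff[OF min_poly_irreducible min_poly_props(3)] assms by blast

lemma algebraic_Q_adjoin_subfield: "algebraic \<alpha> \<Longrightarrow> subfield_C (Q_adjoin \<alpha>)"
  by (rule Q_adjoin_subfield[OF min_poly_irreducible min_poly_props(3)])

section \<open>Degrees via \<open>\<rat>\<close>-bases\<close>

interpretation Q: vector_space "\<lambda>(r::rat) (x::complex). of_rat r * x"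
  by unfold_locales (auto simp: algebra_simps of_rat_add of_rat_mult)

lemma rat_indep_iff_independent: "finite B \<Longrightarrow> rat_indep B \<longleftrightarrow> Q.independent B"
  unfolding rat_indep_def using Q.dependent_finite[of B] by auto

lemma rat_basis_iff:
  "rat_basis F B \<longleftrightarrow> finite B \<and> B \<subseteq> F \<and> Q.independent B \<and> F \<subseteq> Q.span B"
  by (auto simp: rat_basis_def rat_indep_iff_independent Q.span_finite subset_iff image_iff)

lemma subfield_C_span: "subfield_C F \<Longrightarrow> B \<subseteq> F \<Longrightarrow> Q.span B \<subseteq> F"
  by (rule Q.span_minimal)
    (auto simp: Q.subspace_def intro: subfield_C_zero subfield_C_add subfield_C_mult subfield_C_of_rat)

lemma ext_degree_eq_card:
  assumes fin: "finite B" and sub: "B \<subseteq> F" and sp: "F \<subseteq> Q.span B" and ind: "Q.independent B"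
  shows "ext_degree F = card B"
proof -
  have rb: "rat_basis F B" using assms by (simp add: rat_basis_iff)
  define B' where "B' = (SOME B. rat_basis F B)"
  have "rat_basis F B'" unfolding B'_def by (rule someI[of _ B]) (rule rb)
  then have "card B' = Q.dim F"
    using Q.basis_card_eq_dim by (auto simp: rat_basis_iff)
  also have "\<dots> = card B" using Q.basis_card_eq_dim[OF sub sp ind] by simp
  finally show ?thesis unfolding ext_degree_def B'_def using rb by auto
qed

lemma Q_adjoin_coeffs:
  assumes X0: "X \<noteq> 0" and root: "poly (of_rat_poly X) \<alpha> = 0" and x: "x \<in> Q_adjoin \<alpha>"
  obtains q where "x = (\<Sum>i<degree X. of_rat (q i) * \<alpha> ^ i)"
proof -
  obtain p where xp: "x = poly (of_rat_poly p) \<alpha>" using x by (rule Q_adjoinE)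
  define r where "r = p mod X"
  have "p = X * (p div X) + r" by (simp add: r_def)
  then have "poly (of_rat_poly p) \<alpha> = poly (of_rat_poly (X * (p div X) + r)) \<alpha>" by simp
  then have "x = poly (of_rat_poly r) \<alpha>" using root xp by simp
  also have "\<dots> = (\<Sum>i<degree X. of_rat (coeff r i) * \<alpha> ^ i)"
    using degree_mod_less[of X p] X0 by (subst poly_eq_sum_below_degree) (auto simp: r_def)
  finally show thesis by (rule that)
qed

lemma Q_adjoin_eq_span:
  assumes "X \<noteq> 0" "poly (of_rat_poly X) \<alpha> = 0"
  shows "Q_adjoin \<alpha> = Q.span ((\<lambda>i. \<alpha> ^ i) ` {..<degree X})"
proof
  show "Q_adjoin \<alpha> \<subseteq> Q.span ((\<lambda>i. \<alpha> ^ i) ` {..<degree X})"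
  proof
    fix x assume "x \<in> Q_adjoin \<alpha>"
    then obtain q where "x = (\<Sum>i<degree X. of_rat (q i) * \<alpha> ^ i)"
      using Q_adjoin_coeffs[OF assms] by blast
    then show "x \<in> Q.span ((\<lambda>i. \<alpha> ^ i) ` {..<degree X})"
      by (simp only:) (intro Q.span_sum Q.span_scale Q.span_base, auto)
  qed
  have "Q.subspace (Q_adjoin \<alpha>)"
    unfolding Q.subspace_def
    by (auto intro: Q_adjoin_add Q_adjoin_mult)
  then show "Q.span ((\<lambda>i. \<alpha> ^ i) ` {..<degree X}) \<subseteq> Q_adjoin \<alpha>"
    by (rule Q.span_minimal[rotated]) auto
qed

lemma irreducible_root_no_smaller_degree:
  assumes "irreducible X" "poly (of_rat_poly X) \<alpha> = 0"
    and "degree p < degree X" "poly (of_rat_poly p) \<alpha> = 0"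
  shows "p = 0"
  using assms irreducible_root_dvd_iff dvd_imp_degree_le[of X p] by (meson leD)

lemma inj_on_powers_irreducible_root:
  assumes irr: "irreducible X" and root: "poly (of_rat_poly X) \<alpha> = 0"
  shows "inj_on (\<lambda>i. \<alpha> ^ i) {..<degree X}"
proof (rule inj_onI, rule ccontr)
  fix i j assume ij: "i \<in> {..<degree X}" "j \<in> {..<degree X}" "\<alpha> ^ i = \<alpha> ^ j" "i \<noteq> j"
  define p :: "rat poly" where "p = monom 1 i - monom 1 j"
  have "coeff p i = 1" using ij by (simp add: p_def)
  moreover have "degree p < degree X"
    using ij degree_diff_le[of "monom (1::rat) i" "max i j" "monom 1 j"]
    by (simp add: p_def degree_monom_eq)
  moreover have "poly (of_rat_poly p) \<alpha> = 0" using ij by (simp add: p_def poly_monom)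
  ultimately show False using irreducible_root_no_smaller_degree[OF irr root] by fastforce
qed

lemma independent_powers_irreducible_root:
  assumes irr: "irreducible X" and root: "poly (of_rat_poly X) \<alpha> = 0"
  shows "Q.independent ((\<lambda>i. \<alpha> ^ i) ` {..<degree X})"
proof
  assume "Q.dependent ((\<lambda>i. \<alpha> ^ i) ` {..<degree X})"
  then obtain u where u: "\<exists>v\<in>(\<lambda>i. \<alpha> ^ i) ` {..<degree X}. u v \<noteq> 0"
    "(\<Sum>v\<in>(\<lambda>i. \<alpha> ^ i) ` {..<degree X}. of_rat (u v) * v) = 0"
    using Q.dependent_finite[of "(\<lambda>i. \<alpha> ^ i) ` {..<degree X}"] by auto
  define p :: "rat poly" where "p = (\<Sum>i<degree X. monom (u (\<alpha> ^ i)) i)"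
  have "poly (of_rat_poly p) \<alpha> = (\<Sum>i<degree X. of_rat (u (\<alpha> ^ i)) * \<alpha> ^ i)"
    by (simp add: p_def poly_sum poly_monom)
  also have "\<dots> = 0"
    using u(2) by (subst (asm) sum.reindex[OF inj_on_powers_irreducible_root[OF irr root]]) simp
  finally have "poly (of_rat_poly p) \<alpha> = 0" .
  moreover have "degree p \<le> degree X - 1"
    unfolding p_def by (rule degree_sum_le) (auto intro: order.trans[OF degree_monom_le])
  then have "degree p < degree X" using irreducible_degree_pos[OF irr] by linarith
  ultimately have "p = 0" using irreducible_root_no_smaller_degree[OF irr root] by blast
  moreover obtain i0 where i0: "i0 < degree X" "u (\<alpha> ^ i0) \<noteq> 0" using u(1) by auto
  have "coeff p i0 = u (\<alpha> ^ i0)" using i0 by (simp add: p_def coeff_sum)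
  ultimately show False using i0 by simp
qed

lemma ext_degree_Q_adjoin:
  assumes irr: "irreducible X" and root: "poly (of_rat_poly X) \<alpha> = 0"
  shows "ext_degree (Q_adjoin \<alpha>) = degree X"
proof -
  have X0: "X \<noteq> 0" using irr by auto
  have "ext_degree (Q_adjoin \<alpha>) = card ((\<lambda>i. \<alpha> ^ i) ` {..<degree X})"
    by (rule ext_degree_eq_card)
      (use Q_adjoin_eq_span[OF X0 root] independent_powers_irreducible_root[OF irr root] in auto)
  also have "\<dots> = degree X" using inj_on_powers_irreducible_root[OF irr root] by (simp add: card_image)
  finally show ?thesis .
qed

lemma span_mult_closed:
  assumes B: "\<And>b b'. b \<in> B \<Longrightarrow> b' \<in> B \<Longrightarrow> b * b' \<in> Q.span B"
    and x: "x \<in> Q.span B" and y: "y \<in> Q.span B"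
  shows "x * y \<in> Q.span B"
proof -
  have left: "b * z \<in> Q.span B" if b: "b \<in> B" and z: "z \<in> Q.span B" for b z
    using z
  proof (induction rule: Q.span_induct_alt)
    case (step c u w)
    have "b * (of_rat c * u + w) = of_rat c * (b * u) + b * w" by (simp add: algebra_simps)
    then show ?case using step B[OF b step(1)] by (simp add: Q.span_add Q.span_scale)
  qed (simp add: Q.span_zero)
  show ?thesis using x
  proof (induction rule: Q.span_induct_alt)
    case (step c u w)
    have "(of_rat c * u + w) * y = of_rat c * (u * y) + w * y" by (simp add: algebra_simps)
    then show ?case using step left[OF step(1) y] by (simp add: Q.span_add Q.span_scale)
  qed (simp add: Q.span_zero)
qed

text \<open>The \<open>card B + 1\<close> powers \<open>y\<^sup>i\<close>, \<open>i \<le> card B\<close>, satisfy a rational linear relation.\<close>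

lemma span_mult_closed_algebraic:
  assumes fin: "finite B" and one: "1 \<in> Q.span B"
    and B: "\<And>b b'. b \<in> B \<Longrightarrow> b' \<in> B \<Longrightarrow> b * b' \<in> Q.span B"
    and y: "y \<in> Q.span B"
  shows "algebraic y"
proof -
  let ?K = "card B"
  have pw: "y ^ i \<in> Q.span B" for i
    by (induction i) (auto simp: one span_mult_closed[OF B y])
  show ?thesis
  proof (cases "inj_on (\<lambda>i. y ^ i) {..?K}")
    case False
    then obtain i j where ij: "i \<noteq> j" "y ^ i = y ^ j"
      unfolding inj_on_def by auto
    define p :: "rat poly" where "p = monom 1 i - monom 1 j"
    have "coeff p i = 1" using ij by (simp add: p_def)
    then have "p \<noteq> 0" by auto
    moreover have "poly (of_rat_poly p) y = 0" using ij by (simp add: p_def poly_monom)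
    ultimately show ?thesis by (auto simp: algebraic_iff_rat_poly)
  next
    case True
    define S where "S = (\<lambda>i. y ^ i) ` {..?K}"
    have "card S = ?K + 1" using True by (simp add: S_def card_image)
    moreover have "S \<subseteq> Q.span B" using pw by (auto simp: S_def)
    ultimately have "Q.dependent S"
      using Q.independent_span_bound[OF fin, of S] by auto
    then obtain u where u: "\<exists>v\<in>S. u v \<noteq> 0" "(\<Sum>v\<in>S. of_rat (u v) * v) = 0"
      using Q.dependent_finite[of S] by (auto simp: S_def)
    define p :: "rat poly" where "p = (\<Sum>i\<le>?K. monom (u (y ^ i)) i)"
    have "poly (of_rat_poly p) y = (\<Sum>i\<le>?K. of_rat (u (y ^ i)) * y ^ i)"
      by (simp add: p_def poly_sum poly_monom)
    also have "\<dots> = (\<Sum>v\<in>S. of_rat (u v) * v)"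
      unfolding S_def by (subst sum.reindex[OF True]) simp
    finally have "poly (of_rat_poly p) y = 0" using u by simp
    moreover obtain i0 where i0: "i0 \<le> ?K" "u (y ^ i0) \<noteq> 0" using u(1) by (auto simp: S_def)
    have "coeff p i0 = u (y ^ i0)" using i0 by (simp add: p_def coeff_sum)
    then have "p \<noteq> 0" using i0 by auto
    ultimately show ?thesis by (auto simp: algebraic_iff_rat_poly)
  qed
qed

lemma span_mult_closed_subfield:
  assumes fin: "finite B" and one: "1 \<in> Q.span B"
    and B: "\<And>b b'. b \<in> B \<Longrightarrow> b' \<in> B \<Longrightarrow> b * b' \<in> Q.span B"
  shows "subfield_C (Q.span B)"
  unfolding subfield_C_def
proof (intro conjI ballI impI)
  fix y assume y: "y \<in> Q.span B"
  have "Q_adjoin y \<subseteq> Q.span B"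
  proof
    fix x assume "x \<in> Q_adjoin y"
    then obtain p where "x = poly (of_rat_poly p) y" by (rule Q_adjoinE)
    moreover have "poly (of_rat_poly p) y \<in> Q.span B"
      by (induction p) (auto intro: Q.span_zero Q.span_add Q.span_scale[OF one, simplified]
          span_mult_closed[OF B y])
    ultimately show "x \<in> Q.span B" by simp
  qed
  moreover have "inverse y \<in> Q_adjoin y"
    using span_mult_closed_algebraic[OF fin one B y]
    by (intro subfield_C_inverse algebraic_Q_adjoin_subfield Q_adjoin_self)
  ultimately show "inverse y \<in> Q.span B" by blast
  show "- y \<in> Q.span B" using y by (rule Q.span_neg)
  show "y * z \<in> Q.span B" "y + z \<in> Q.span B" if "z \<in> Q.span B" for z
    using y that by (simp_all add: span_mult_closed[OF B] Q.span_add)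
qed (simp_all add: one Q.span_zero)

lemma Q_adjoin_algebraic:
  assumes irr: "irreducible X" and root: "poly (of_rat_poly X) \<beta> = 0" and x: "x \<in> Q_adjoin \<beta>"
  shows "algebraic x"
proof -
  have X0: "X \<noteq> 0" using irr by auto
  note span = Q_adjoin_eq_span[OF X0 root]
  show ?thesis
  proof (rule span_mult_closed_algebraic)
    show "1 \<in> Q.span ((\<lambda>i. \<beta> ^ i) ` {..<degree X})"
      using Q_adjoin_of_rat[of 1 \<beta>] span by simp
    show "b * b' \<in> Q.span ((\<lambda>i. \<beta> ^ i) ` {..<degree X})"
      if "b \<in> (\<lambda>i. \<beta> ^ i) ` {..<degree X}" "b' \<in> (\<lambda>i. \<beta> ^ i) ` {..<degree X}" for b b'
      using that Q_adjoin_mult[OF Q_adjoin_power Q_adjoin_power] span by auto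
  qed (use x span in auto)
qed

section \<open>Isomorphisms over \<open>\<rat>\<close> and the root capacity\<close>

lemma Q_hom_poly:
  assumes hom: "\<forall>x\<in>Q_adjoin \<alpha>. \<forall>y\<in>Q_adjoin \<alpha>. \<phi> (x + y) = \<phi> x + \<phi> y \<and> \<phi> (x * y) = \<phi> x * \<phi> y"
    and rat: "\<forall>r. \<phi> (of_rat r) = of_rat r"
  shows "\<phi> (poly (of_rat_poly p) \<alpha>) = poly (of_rat_poly p) (\<phi> \<alpha>)"
proof (induction p)
  case 0
  then show ?case using rat[rule_format, of 0] by simp
next
  case (pCons r p)
  have "\<phi> (poly (of_rat_poly (pCons r p)) \<alpha>) = \<phi> (of_rat r + \<alpha> * poly (of_rat_poly p) \<alpha>)" by simp
  also have "\<dots> = \<phi> (of_rat r) + \<phi> (\<alpha> * poly (of_rat_poly p) \<alpha>)"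
    using hom Q_adjoin_of_rat Q_adjoin_mult[OF Q_adjoin_self Q_adjoin_poly] by blast
  also have "\<phi> (\<alpha> * poly (of_rat_poly p) \<alpha>) = \<phi> \<alpha> * \<phi> (poly (of_rat_poly p) \<alpha>)"
    using hom Q_adjoin_self Q_adjoin_poly by blast
  finally show ?case using pCons.IH rat by simp
qed

lemma iso_over_Q_Q_adjoinE:
  assumes "iso_over_Q (Q_adjoin \<alpha>) L'"
  obtains \<beta> where "L' = Q_adjoin \<beta>"
    and "\<And>p. poly (of_rat_poly p) \<alpha> = 0 \<Longrightarrow> poly (of_rat_poly p) \<beta> = 0"
proof -
  obtain \<phi> where bij: "bij_betw \<phi> (Q_adjoin \<alpha>) L'"
    and hom: "\<forall>x\<in>Q_adjoin \<alpha>. \<forall>y\<in>Q_adjoin \<alpha>. \<phi> (x + y) = \<phi> x + \<phi> y \<and> \<phi> (x * y) = \<phi> x * \<phi> y"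
    and rat: "\<forall>r. \<phi> (of_rat r) = of_rat r"
    using assms unfolding iso_over_Q_def by blast
  note hp = Q_hom_poly[OF hom rat]
  have "L' = \<phi> ` Q_adjoin \<alpha>" using bij by (simp add: bij_betw_def)
  also have "\<dots> = Q_adjoin (\<phi> \<alpha>)" unfolding Q_adjoin_def image_image by (simp add: hp)
  finally show thesis
    by (rule that) (use hp rat in \<open>metis of_rat_0\<close>)
qed

lemma iso_over_Q_conjugates:
  assumes irr: "irreducible X"
    and root: "poly (of_rat_poly X) \<alpha> = 0" "poly (of_rat_poly X) \<beta> = 0"
  shows "iso_over_Q (Q_adjoin \<alpha>) (Q_adjoin \<beta>)"
proof -
  define \<phi> where "\<phi> x = poly (of_rat_poly (SOME p. x = poly (of_rat_poly p) \<alpha>)) \<beta>" for x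
  have eval: "\<phi> (poly (of_rat_poly p) \<alpha>) = poly (of_rat_poly p) \<beta>" for p
  proof -
    define p' where "p' = (SOME p'. poly (of_rat_poly p) \<alpha> = poly (of_rat_poly p') \<alpha>)"
    have "poly (of_rat_poly p) \<alpha> = poly (of_rat_poly p') \<alpha>" unfolding p'_def by (rule someI[of _ p]) simp
    then have "poly (of_rat_poly (p' - p)) \<alpha> = 0" by simp
    then have "poly (of_rat_poly (p' - p)) \<beta> = 0" by (rule conjugate_root[OF irr root])
    then show ?thesis by (simp add: \<phi>_def p'_def)
  qed
  have "inj_on \<phi> (Q_adjoin \<alpha>)"
  proof (rule inj_onI)
    fix x y assume "x \<in> Q_adjoin \<alpha>" "y \<in> Q_adjoin \<alpha>" and e: "\<phi> x = \<phi> y"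
    then obtain p q where xy: "x = poly (of_rat_poly p) \<alpha>" "y = poly (of_rat_poly q) \<alpha>"
      by (auto simp: Q_adjoin_def)
    then have "poly (of_rat_poly (p - q)) \<beta> = 0" using e eval by simp
    then have "poly (of_rat_poly (p - q)) \<alpha> = 0" by (rule conjugate_root[OF irr root(2,1)])
    then show "x = y" using xy by simp
  qed
  moreover have "\<phi> ` Q_adjoin \<alpha> = Q_adjoin \<beta>" unfolding Q_adjoin_def image_image by (simp add: eval)
  ultimately have "bij_betw \<phi> (Q_adjoin \<alpha>) (Q_adjoin \<beta>)" by (rule bij_betw_imageI)
  moreover have "\<phi> (x + y) = \<phi> x + \<phi> y \<and> \<phi> (x * y) = \<phi> x * \<phi> y"
    if x: "x \<in> Q_adjoin \<alpha>" and y: "y \<in> Q_adjoin \<alpha>" for x y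
  proof -
    obtain p where x: "x = poly (of_rat_poly p) \<alpha>" using x by (rule Q_adjoinE)
    obtain q where y: "y = poly (of_rat_poly q) \<alpha>" using y by (rule Q_adjoinE)
    note xy = x y
    have "\<phi> (x + y) = \<phi> (poly (of_rat_poly (p + q)) \<alpha>)" "\<phi> (x * y) = \<phi> (poly (of_rat_poly (p * q)) \<alpha>)"
      using xy by simp_all
    then show ?thesis using xy by (simp only: eval) simp
  qed
  moreover have "\<phi> (of_rat r) = of_rat r" for r
    using eval[of "[:r:]"] by simp
  ultimately show ?thesis unfolding iso_over_Q_def by blast
qed

text \<open>With \<open>\<beta> = w(\<alpha>)\<close> and \<open>\<alpha> = u(\<beta>)\<close>, the maps \<open>x \<mapsto> w(x)\<close> and \<open>y \<mapsto> u(y)\<close> are inverse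
  bijections between the two root sets.\<close>

lemma card_roots_primitive_elements:
  assumes irrP: "irreducible P" and rootP: "poly (of_rat_poly P) \<alpha> = 0"
    and irrX: "irreducible X" and rootX: "poly (of_rat_poly X) \<beta> = 0"
    and eq: "Q_adjoin \<alpha> = Q_adjoin \<beta>" and M: "subfield_C M"
  shows "card {x \<in> M. poly (of_rat_poly P) x = 0} = card {y \<in> M. poly (of_rat_poly X) y = 0}"
proof -
  obtain w where w: "\<beta> = poly (of_rat_poly w) \<alpha>" using eq Q_adjoin_self[of \<beta>] by (auto simp: Q_adjoin_def)
  obtain u where u: "\<alpha> = poly (of_rat_poly u) \<beta>" using eq Q_adjoin_self[of \<alpha>] by (auto simp: Q_adjoin_def)
  define R where "R = {x \<in> M. poly (of_rat_poly P) x = 0}"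
  define T where "T = {y \<in> M. poly (of_rat_poly X) y = 0}"
  have R: "poly (of_rat_poly q) x = 0" if "x \<in> R" "poly (of_rat_poly q) \<alpha> = 0" for q x
    using conjugate_root[OF irrP rootP _ that(2)] that(1) by (simp add: R_def)
  have T: "poly (of_rat_poly q) y = 0" if "y \<in> T" "poly (of_rat_poly q) \<beta> = 0" for q y
    using conjugate_root[OF irrX rootX _ that(2)] that(1) by (simp add: T_def)
  note wu = w[symmetric] u[symmetric]
  have "bij_betw (\<lambda>x. poly (of_rat_poly w) x) R T"
  proof (rule bij_betw_byWitness[where f'="\<lambda>y. poly (of_rat_poly u) y"])
    show "\<forall>x\<in>R. poly (of_rat_poly u) (poly (of_rat_poly w) x) = x"
      using R[of _ "pcompose u w - [:0, 1:]"] by (simp add: poly_pcompose wu)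
    show "\<forall>y\<in>T. poly (of_rat_poly w) (poly (of_rat_poly u) y) = y"
      using T[of _ "pcompose w u - [:0, 1:]"] by (simp add: poly_pcompose wu)
    show "(\<lambda>x. poly (of_rat_poly w) x) ` R \<subseteq> T"
      using R[of _ "pcompose X w"] rootX subfield_C_poly[OF M]
      by (auto simp: R_def T_def poly_pcompose wu)
    show "(\<lambda>y. poly (of_rat_poly u) y) ` T \<subseteq> R"
      using T[of _ "pcompose P u"] rootP subfield_C_poly[OF M]
      by (auto simp: R_def T_def poly_pcompose wu)
  qed
  then show ?thesis unfolding R_def T_def by (rule bij_betw_same_card)
qed

lemma root_capacity_eq_card_roots:
  assumes irr: "irreducible X" and root: "poly (of_rat_poly X) \<beta> = 0" and M: "subfield_C M"
  shows "root_capacity M (gen_field {\<beta>}) = card {y \<in> M. poly (of_rat_poly X) y = 0}"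
proof -
  define \<alpha> where "\<alpha> = (SOME \<alpha>. gen_field {\<beta>} = gen_field {\<alpha>})"
  have L\<alpha>: "gen_field {\<beta>} = gen_field {\<alpha>}" unfolding \<alpha>_def by (rule someI[of _ \<beta>]) simp
  have L\<beta>: "gen_field {\<beta>} = Q_adjoin \<beta>" by (rule gen_field_singleton[OF irr root])
  have "\<alpha> \<in> Q_adjoin \<beta>" using L\<alpha> L\<beta> gen_field_superset by blast
  then have alg: "algebraic \<alpha>" by (rule Q_adjoin_algebraic[OF irr root])
  note P = min_poly_irreducible[OF alg] min_poly_props(3)[OF alg]
  have "Q_adjoin \<alpha> = Q_adjoin \<beta>" using L\<alpha> L\<beta> gen_field_singleton[OF P] by simp
  then show ?thesis
    unfolding root_capacity_def Let_def \<alpha>_def[symmetric]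
    by (rule card_roots_primitive_elements[OF P irr root _ M])
qed

section \<open>Roots of unity\<close>

definition primitive_root :: "nat \<Rightarrow> complex \<Rightarrow> bool" where
  "primitive_root n \<zeta> \<longleftrightarrow> \<zeta> ^ n = 1 \<and> (\<forall>k. 0 < k \<and> k < n \<longrightarrow> \<zeta> ^ k \<noteq> 1)"

lemma primitive_root_iff:
  assumes "n > 0"
  shows "primitive_root n \<zeta> \<longleftrightarrow> (\<forall>k. \<zeta> ^ k = 1 \<longleftrightarrow> n dvd k)"
proof
  assume prim: "primitive_root n \<zeta>"
  show "\<forall>k. \<zeta> ^ k = 1 \<longleftrightarrow> n dvd k"
  proof
    fix k
    have "\<zeta> ^ k = (\<zeta> ^ n) ^ (k div n) * \<zeta> ^ (k mod n)"
      by (simp flip: power_mult power_add)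
    then have "\<zeta> ^ k = \<zeta> ^ (k mod n)" using prim by (simp add: primitive_root_def)
    then show "\<zeta> ^ k = 1 \<longleftrightarrow> n dvd k"
      using prim assms by (auto simp: primitive_root_def dvd_eq_mod_eq_0)
  qed
qed (auto simp: primitive_root_def dest: dvd_imp_le)

lemma primitive_root_nonzero: "primitive_root n \<zeta> \<Longrightarrow> n > 0 \<Longrightarrow> \<zeta> \<noteq> 0"
  by (auto simp: primitive_root_def power_0_left)

lemma primitive_root_power:
  assumes "primitive_root n \<zeta>" "n = s * N" "n > 0"
  shows "primitive_root N (\<zeta> ^ s)"
  using assms by (auto simp: primitive_root_iff simp flip: power_mult)

lemma primitive_root_power_root_of_unity: "primitive_root n \<zeta> \<Longrightarrow> (\<zeta> ^ j) ^ n = 1"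
  unfolding primitive_root_def by (metis mult.commute power_mult power_one)

lemma primitive_root_inj_on:
  assumes prim: "primitive_root n \<zeta>" and n: "n > 0"
  shows "inj_on (\<lambda>j. \<zeta> ^ j) {..<n}"
proof -
  have "i = j" if ij: "i < n" "j < n" "\<zeta> ^ i = \<zeta> ^ j" "i \<le> j" for i j
  proof -
    have "\<zeta> ^ i * \<zeta> ^ (j - i) = \<zeta> ^ j" using ij(4) by (simp flip: power_add)
    then have "\<zeta> ^ i * \<zeta> ^ (j - i) = \<zeta> ^ i * 1" using ij(3) by simp
    then have "\<zeta> ^ (j - i) = 1" using primitive_root_nonzero[OF prim n] by simp
    then have "n dvd (j - i)" using prim n by (simp add: primitive_root_iff)
    then show ?thesis using ij by (cases "j - i = 0") (auto dest: dvd_imp_le)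
  qed
  then show ?thesis by (metis inj_onI lessThan_iff nle_le)
qed

lemma unity_poly_nonzero: "N > 0 \<Longrightarrow> monom (1::rat) N - 1 \<noteq> 0"
  using degree_monom_minus_const[of N "1::rat"] by (auto simp: one_pCons)

lemma root_of_unity_algebraic: "(z :: complex) ^ N = 1 \<Longrightarrow> N > 0 \<Longrightarrow> algebraic z"
proof -
  assume "z ^ N = 1" "N > 0"
  then have "monom (1::rat) N - 1 \<noteq> 0" "poly (of_rat_poly (monom 1 N - 1)) z = 0"
    using unity_poly_nonzero by (simp_all add: poly_monom)
  then show ?thesis unfolding algebraic_iff_rat_poly by blast
qed

lemma root_of_unity_eq_power:
  assumes prim: "primitive_root n \<zeta>" and n: "n > 0" and z: "z ^ n = 1"
  obtains k where "k < n" "z = \<zeta> ^ k"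
proof -
  define p where "p = of_rat_poly (monom 1 n - 1)"
  have p0: "p \<noteq> 0" unfolding p_def of_rat_poly_eq_0_iff by (rule unity_poly_nonzero[OF n])
  have "degree p = n"
    unfolding p_def degree_of_rat_poly using degree_monom_minus_const[OF n, of "1::rat"]
    by (simp add: one_pCons)
  then have card: "card {w. poly p w = 0} \<le> n" using card_poly_roots_bound[OF p0] by simp
  have sub: "(\<lambda>j. \<zeta> ^ j) ` {..<n} \<subseteq> {w. poly p w = 0}"
    using primitive_root_power_root_of_unity[OF prim] by (auto simp: p_def poly_monom)
  have "card ((\<lambda>j. \<zeta> ^ j) ` {..<n}) = n"
    using primitive_root_inj_on[OF prim n] by (simp add: card_image)
  then have "(\<lambda>j. \<zeta> ^ j) ` {..<n} = {w. poly p w = 0}"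
    using card card_mono[OF poly_roots_finite[OF p0] sub]
    by (intro card_subset_eq[OF poly_roots_finite[OF p0] sub]) simp
  moreover have "z \<in> {w. poly p w = 0}" using z by (simp add: p_def poly_monom)
  ultimately show thesis using that by auto
qed

lemma cnj_root_of_unity:
  assumes "z ^ n = 1" "n > 0"
  shows "cnj z = z ^ (n - 1)"
proof -
  have "cmod z ^ n = 1 ^ n" using assms(1) by (metis norm_one norm_power power_one)
  then have "cmod z = 1" using assms(2) by (intro power_eq_imp_eq_base[of "cmod z" n 1]) auto
  then have "z * cnj z = 1" using complex_norm_square[of z] by simp
  moreover have "z * z ^ (n - 1) = 1" using assms by (simp flip: power_Suc)
  ultimately show ?thesis by (metis inverse_unique)
qed

lemma Q_adjoin_root_of_unity_cnj:
  assumes "z ^ n = 1" "n > 0" "x \<in> Q_adjoin z"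
  shows "cnj x \<in> Q_adjoin z"
proof -
  obtain h where "x = poly (of_rat_poly h) z" using assms(3) by (rule Q_adjoinE)
  then have "cnj x = poly (of_rat_poly h) (cnj z)" by (simp add: poly_of_rat_poly_cnj)
  also have "\<dots> = poly (of_rat_poly (pcompose h (monom 1 (n - 1)))) z"
    using cnj_root_of_unity[OF assms(1,2)] by (simp add: poly_pcompose poly_monom)
  finally show ?thesis by (simp only: Q_adjoin_poly)
qed

lemma rat_root_of_unity_odd:
  assumes "odd m" and "(of_rat \<rho> :: complex) ^ m = 1"
  shows "\<rho> = 1"
proof -
  have r: "\<rho> ^ m = 1" using assms(2) by (metis of_rat_1 of_rat_eq_iff of_rat_power)
  then have "\<bar>\<rho>\<bar> ^ m = 1 ^ m" by (simp flip: power_abs)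
  then have "\<bar>\<rho>\<bar> = 1" using \<open>odd m\<close> by (intro power_eq_imp_eq_base[of "\<bar>\<rho>\<bar>" m 1]) (auto intro: odd_pos)
  moreover have "\<rho> \<noteq> -1" using r \<open>odd m\<close> by auto
  ultimately show ?thesis by linarith
qed

text \<open>\<open>x\<^sup>n - 1 = P Q\<close> has the \<open>n\<close> distinct roots \<open>\<zeta>\<^sup>j\<close>, and at most \<open>degree Q\<close> of them are roots
  of \<open>Q\<close>.\<close>

lemma degree_le_card_roots_if_dvd_unity_poly:
  assumes prim: "primitive_root n \<zeta>" and n: "n > 0" and dv: "P dvd (monom 1 n - 1)"
  shows "degree P \<le> card {z. poly (of_rat_poly P) z = 0}"
proof -
  obtain Q where Q: "monom 1 n - 1 = P * Q" using dv by (elim dvdE)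
  have P0: "P \<noteq> 0" and Q0: "Q \<noteq> 0" using Q unity_poly_nonzero[OF n] by auto
  have "n = degree P + degree Q"
    using degree_monom_minus_const[OF n, of "1::rat"] Q P0 Q0 by (simp add: degree_mult_eq one_pCons)
  have "(\<lambda>j. \<zeta> ^ j) ` {..<n} \<subseteq> {z. poly (of_rat_poly P) z = 0} \<union> {z. poly (of_rat_poly Q) z = 0}"
  proof
    fix w assume "w \<in> (\<lambda>j. \<zeta> ^ j) ` {..<n}"
    then have "w ^ n = 1" using primitive_root_power_root_of_unity[OF prim] by blast
    then have "poly (of_rat_poly (monom 1 n - 1)) w = 0" by (simp add: poly_monom)
    then show "w \<in> {z. poly (of_rat_poly P) z = 0} \<union> {z. poly (of_rat_poly Q) z = 0}"
      unfolding Q by simp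
  qed
  then have "n \<le> card ({z. poly (of_rat_poly P) z = 0} \<union> {z. poly (of_rat_poly Q) z = 0})"
    using primitive_root_inj_on[OF prim n] P0 Q0
    by (metis card_image card_lessThan card_mono finite_Un of_rat_poly_eq_0_iff poly_roots_finite)
  also have "\<dots> \<le> card {z. poly (of_rat_poly P) z = 0} + card {z. poly (of_rat_poly Q) z = 0}"
    by (rule card_Un_le)
  also have "card {z. poly (of_rat_poly Q) z = 0} \<le> degree Q"
    using card_poly_roots_bound[of "of_rat_poly Q"] Q0 by simp
  finally show ?thesis using \<open>n = degree P + degree Q\<close> by linarith
qed

section \<open>Conjugates of roots of unity\<close>

abbreviation rat_of_int_poly :: "int poly \<Rightarrow> rat poly" where
  "rat_of_int_poly \<equiv> map_poly of_int"

lemma coeff_rat_of_int_poly [simp]: "coeff (rat_of_int_poly p) i = of_int (coeff p i)"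
  by (simp add: coeff_map_poly)

lemma rat_of_int_poly_add [simp]:
  "rat_of_int_poly (p + q) = rat_of_int_poly p + rat_of_int_poly q"
  by (rule poly_eqI) simp

lemma rat_of_int_poly_diff [simp]:
  "rat_of_int_poly (p - q) = rat_of_int_poly p - rat_of_int_poly q"
  by (rule poly_eqI) simp

lemma rat_of_int_poly_uminus [simp]: "rat_of_int_poly (- p) = - rat_of_int_poly p"
  by (rule poly_eqI) simp

lemma rat_of_int_poly_smult [simp]:
  "rat_of_int_poly (smult r p) = smult (of_int r) (rat_of_int_poly p)"
  by (rule poly_eqI) simp

lemma rat_of_int_poly_pCons [simp]:
  "rat_of_int_poly (pCons r p) = pCons (of_int r) (rat_of_int_poly p)"
  by (simp add: map_poly_pCons)

lemma rat_of_int_poly_monom [simp]: "rat_of_int_poly (monom r k) = monom (of_int r) k"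
  by (simp add: map_poly_monom)

lemma rat_of_int_poly_mult [simp]:
  "rat_of_int_poly (p * q) = rat_of_int_poly p * rat_of_int_poly q"
  by (induction p) (simp_all add: algebra_simps)

lemma rat_of_int_poly_pcompose [simp]:
  "rat_of_int_poly (pcompose p q) = pcompose (rat_of_int_poly p) (rat_of_int_poly q)"
  by (induction p) (simp_all add: pcompose_pCons)

lemma rat_of_int_poly_eq_iff [simp]: "rat_of_int_poly p = rat_of_int_poly q \<longleftrightarrow> p = q"
  by (auto simp: poly_eq_iff)

lemma rat_of_int_poly_eq_0_iff [simp]: "rat_of_int_poly p = 0 \<longleftrightarrow> p = 0"
  using rat_of_int_poly_eq_iff[of p 0] by simp

lemma degree_rat_of_int_poly [simp]: "degree (rat_of_int_poly p) = degree p"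
  by (simp add: degree_map_poly)

lemma monic_int_poly_divmod:
  fixes F p :: "int poly"
  assumes "lead_coeff F = 1"
  obtains s r where "p = F * s + r" "r = 0 \<or> degree r < degree F"
proof -
  have F0: "F \<noteq> 0" using assms by auto
  obtain s r where sr: "pseudo_divmod p F = (s, r)" by (cases "pseudo_divmod p F")
  from pseudo_divmod[OF F0 sr] assms show thesis using that by auto
qed

lemma monic_int_poly_dvd_if_rat_dvd:
  fixes F P :: "int poly"
  assumes mon: "lead_coeff F = 1" and dv: "rat_of_int_poly F dvd rat_of_int_poly P"
  shows "F dvd P"
proof -
  obtain s r where sr: "P = F * s + r" "r = 0 \<or> degree r < degree F"
    using monic_int_poly_divmod[OF mon] by blast
  have "rat_of_int_poly r = rat_of_int_poly P - rat_of_int_poly F * rat_of_int_poly s" using sr by simp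
  then have "rat_of_int_poly F dvd rat_of_int_poly r" using dv by simp
  then have "r = 0"
    using sr(2) dvd_imp_degree_le[of "rat_of_int_poly F" "rat_of_int_poly r"] by fastforce
  then show ?thesis using sr by simp
qed

lemma rat_poly_clear_denominators: "\<exists>d F. d > 0 \<and> smult (of_int d) (p :: rat poly) = rat_of_int_poly F"
proof (induction p)
  case 0
  then show ?case by (intro exI[of _ 1] exI[of _ 0]) simp
next
  case (pCons a p)
  obtain d F where dF: "d > 0" "smult (of_int d) p = rat_of_int_poly F" using pCons by blast
  obtain x y where a: "a = Rat.Fract x y" "y > 0" by (cases a) auto
  have ya: "of_int y * a = of_int x" using a by (simp add: Fract_of_int_quotient)
  have "smult (of_int (d * y)) (pCons a p) =
      pCons (of_int d * (of_int y * a)) (smult (of_int y) (smult (of_int d) p))"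
    by (simp add: algebra_simps)
  also have "\<dots> = rat_of_int_poly (pCons (d * x) (smult y F))" using ya dF by simp
  finally show ?case using dF a by (metis mult_pos_pos)
qed

lemma rat_poly_primitive_multiple:
  assumes p0: "(p :: rat poly) \<noteq> 0"
  obtains s A where "s \<noteq> 0" "smult s p = rat_of_int_poly A" "content A = 1"
proof -
  obtain d F where dF: "d > 0" "smult (of_int d) p = rat_of_int_poly F"
    using rat_poly_clear_denominators by blast
  have F0: "F \<noteq> 0" using dF p0 by (metis rat_of_int_poly_eq_0_iff of_int_0_less_iff order_less_irrefl smult_eq_0_iff)
  define A where "A = primitive_part F"
  have cF: "content F \<noteq> 0" using F0 by simp
  have "rat_of_int_poly F = smult (of_int (content F)) (rat_of_int_poly A)"
    by (simp add: A_def flip: rat_of_int_poly_smult)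
  then have "smult (inverse (of_int (content F))) (smult (of_int d) p) = rat_of_int_poly A"
    using dF cF by simp
  then have "smult (of_int d / of_int (content F)) p = rat_of_int_poly A"
    by (simp add: divide_inverse mult.commute)
  moreover have "of_int d / of_int (content F) \<noteq> (0::rat)" using dF cF by simp
  moreover have "content A = 1" using F0 by (simp add: A_def)
  ultimately show thesis using that by blast
qed

lemma content_monic: "lead_coeff (h :: int poly) = 1 \<Longrightarrow> content h = 1"
  using content_dvd_coeff[of h "degree h"] is_unit_content_iff[of h] by simp

lemma monic_rat_factor_of_monic_int_poly:
  fixes P Q :: "rat poly" and h :: "int poly"
  assumes eq: "P * Q = rat_of_int_poly h" and mP: "lead_coeff P = 1" and mh: "lead_coeff h = 1"
  obtains F where "P = rat_of_int_poly F" "lead_coeff F = 1"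
proof -
  have P0: "P \<noteq> 0" and Q0: "Q \<noteq> 0" using eq mh by auto
  have mQ: "lead_coeff Q = 1"
    using arg_cong[OF eq, of lead_coeff] mP mh by (simp add: lead_coeff_mult)
  obtain s1 A where A: "s1 \<noteq> 0" "smult s1 P = rat_of_int_poly A" "content A = 1"
    using rat_poly_primitive_multiple[OF P0] by blast
  obtain s2 B where B: "s2 \<noteq> 0" "smult s2 Q = rat_of_int_poly B" "content B = 1"
    using rat_poly_primitive_multiple[OF Q0] by blast
  have s1: "s1 = of_int (lead_coeff A)" using arg_cong[OF A(2), of lead_coeff] mP A(1) by simp
  have s2: "s2 = of_int (lead_coeff B)" using arg_cong[OF B(2), of lead_coeff] mQ B(1) by simp
  define k where "k = lead_coeff A * lead_coeff B"
  have "rat_of_int_poly (A * B) = smult (s1 * s2) (P * Q)"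
    unfolding rat_of_int_poly_mult A(2)[symmetric] B(2)[symmetric] by (simp add: mult.commute)
  also have "\<dots> = rat_of_int_poly (smult k h)" using eq s1 s2 by (simp add: k_def)
  finally have AB: "A * B = smult k h" by (simp only: rat_of_int_poly_eq_iff)
  have "content (A * B) = 1" using A B by (simp add: content_mult)
  then have "normalize k = 1" using AB content_monic[OF mh] by simp
  then have "is_unit (lead_coeff A)" unfolding k_def by (metis normalize_1_iff is_unit_mult_iff)
  then have "\<bar>lead_coeff A\<bar> = 1" by (simp only: zdvd1_eq)
  then have "lead_coeff A = 1 \<or> lead_coeff A = -1" by linarith
  then show thesis
  proof
    assume "lead_coeff A = 1"
    then show thesis using A s1 by (intro that[of A]) simp_all
  next
    assume m1: "lead_coeff A = -1"
    then have "smult (-1) P = rat_of_int_poly A" using A s1 by simp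
    then have "P = rat_of_int_poly (- A)" by simp
    then show thesis using m1 by (intro that[of "- A"]) simp_all
  qed
qed

lemma binomial_prime_power:
  fixes x y :: "'a :: comm_ring_1"
  assumes q: "prime q"
  shows "\<exists>z. (x + y) ^ q = x ^ q + y ^ q + of_nat q * z"
proof -
  have q0: "q > 0" using q prime_gt_0_nat by blast
  have "(x + y) ^ q = (\<Sum>k\<le>q. of_nat (q choose k) * x ^ k * y ^ (q - k))"
    by (rule binomial_ring)
  also have "\<dots> = (\<Sum>k\<in>{0,q}. of_nat (q choose k) * x ^ k * y ^ (q - k))
      + (\<Sum>k\<in>{..q}-{0,q}. of_nat (q choose k) * x ^ k * y ^ (q - k))"
    by (subst sum.subset_diff[of "{0,q}"]) auto
  also have "(\<Sum>k\<in>{0,q}. of_nat (q choose k) * x ^ k * y ^ (q - k)) = x ^ q + y ^ q"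
    using q0 by simp
  also have "(\<Sum>k\<in>{..q}-{0,q}. of_nat (q choose k) * x ^ k * y ^ (q - k))
     = of_nat q * (\<Sum>k\<in>{..q}-{0,q}. of_nat ((q choose k) div q) * x ^ k * y ^ (q - k))"
  proof -
    have "of_nat (q choose k) = (of_nat q * of_nat ((q choose k) div q) :: 'a)"
      if "k \<in> {..q}-{0,q}" for k
    proof -
      have "q dvd (q choose k)" using that q by (intro dvd_choose_prime) auto
      then show ?thesis by (metis dvd_mult_div_cancel of_nat_mult)
    qed
    then show ?thesis by (simp add: sum_distrib_left mult.assoc)
  qed
  finally show ?thesis by blast
qed

lemma fermat_little_int:
  assumes q: "prime q"
  shows "\<exists>t. (a::int) ^ q = a + int q * t"
proof -
  have nat_case: "\<exists>t. (int b) ^ q = int b + int q * t" for b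
  proof (induction b)
    case 0
    then show ?case using q by (auto simp: prime_gt_0_nat power_0_left)
  next
    case (Suc b)
    obtain t where t: "(int b) ^ q = int b + int q * t" using Suc by blast
    obtain z where z: "(int b + 1) ^ q = int b ^ q + 1 ^ q + of_nat q * z"
      using binomial_prime_power[OF q] by blast
    have "int (Suc b) ^ q = int (Suc b) + int q * (t + z)" using t z by (simp add: algebra_simps)
    then show ?case by blast
  qed
  have qpos: "int q > 0" using q prime_gt_0_nat by auto
  define b where "b = a mod int q"
  define k where "k = a div int q"
  have a: "a = b + int q * k" by (simp add: b_def k_def)
  obtain t where t: "b ^ q = b + int q * t"
    using nat_case[of "nat b"] qpos by (auto simp: b_def)
  obtain z where z: "(b + int q * k) ^ q = b ^ q + (int q * k) ^ q + of_nat q * z"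
    using binomial_prime_power[OF q] by blast
  have q1: "q = Suc (q - 1)" using q prime_gt_0_nat by auto
  have "(int q * k) ^ q = int q * (int q ^ (q - 1) * k ^ q)"
    by (subst (1 2) q1) (simp add: power_mult_distrib)
  then have "a ^ q = a + int q * (t + int q ^ (q - 1) * k ^ q + z - k)"
    using a t z by (simp add: algebra_simps)
  then show ?thesis by blast
qed

lemma int_poly_power_prime:
  fixes G :: "int poly"
  assumes q: "prime q"
  shows "\<exists>H. G ^ q = pcompose G (monom 1 q) + smult (int q) H"
proof (induction G)
  case 0
  then show ?case using q by (auto simp: prime_gt_0_nat power_0_left)
next
  case (pCons a G)
  obtain H where H: "G ^ q = pcompose G (monom 1 q) + smult (int q) H" using pCons by blast
  obtain t where t: "a ^ q = a + int q * t" using fermat_little_int[OF q] by blast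
  have e: "pCons a G = [:a:] + monom 1 1 * G" by (simp add: monom_Suc)
  obtain K where K: "([:a:] + monom 1 1 * G) ^ q = [:a:] ^ q + (monom 1 1 * G) ^ q + of_nat q * K"
    using binomial_prime_power[OF q] by blast
  have "[:a:] ^ q = [:a:] + smult (int q) [:t:]" using t by (simp add: poly_const_pow monom_0)
  moreover have "(monom 1 1 * G) ^ q = monom 1 q * G ^ q"
    by (simp add: power_mult_distrib monom_power)
  moreover have "(of_nat q :: int poly) * K = smult (int q) K"
    by (simp add: of_nat_poly)
  moreover have "pcompose (pCons a G) (monom 1 q) = [:a:] + monom 1 q * pcompose G (monom 1 q)"
    by (simp add: pcompose_pCons monom_0)
  ultimately have "(pCons a G) ^ q =
      pcompose (pCons a G) (monom 1 q) + smult (int q) ([:t:] + monom 1 q * H + K)"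
    using H K e by (simp add: algebra_simps smult_add_right)
  then show ?case by blast
qed

lemma power_add_eq_power_plus_multiple: "\<exists>C. ((x::'a::comm_ring_1) + y) ^ n = x ^ n + y * C"
proof (induction n)
  case 0 then show ?case by (intro exI[of _ 0]) simp
next
  case (Suc n)
  obtain C where C: "(x + y) ^ n = x ^ n + y * C" using Suc by blast
  have "(x + y) ^ Suc n = x ^ Suc n + y * (x ^ n + (x + y) * C)"
    by (simp add: C algebra_simps)
  then show ?case by blast
qed

lemma unity_poly_factor_identity:
  fixes F G :: "int poly"
  assumes FG: "monom 1 N - 1 = F * G" and N: "N > 0"
  shows "[:of_nat N:] = G * ([:0,1:] * pderiv F) + F * ([:0,1:] * pderiv G - smult (of_nat N) G)"
proof -
  have "[:0, 1:] * monom (c::int) (N - 1) = monom c N" for c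
    using N by (simp flip: monom_Suc)
  then have "[:0,1:] * pderiv (monom 1 N - 1 :: int poly) = smult (of_nat N) (monom 1 N)"
    by (simp add: pderiv_diff pderiv_monom smult_monom)
  then have "[:of_nat N:] = [:0,1:] * pderiv (F * G) - smult (of_nat N) (F * G)"
    by (simp flip: FG add: smult_diff_right)
  then show ?thesis by (simp add: pderiv_mult algebra_simps)
qed

text \<open>The Dedekind--Landau argument: \<open>N = G A + F B\<close> by the identity above; raising it to the
  \<open>q\<close>-th power and using \<open>G\<^sup>q \<equiv> G(x\<^sup>q) \<equiv> 0\<close> modulo \<open>F\<close> and \<open>q\<close> shows that \<open>F\<close> divides
  \<open>N\<^sup>q - q R\<close> for some \<open>R\<close> of smaller degree, so \<open>N\<^sup>q = q R(0)\<close>.\<close>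

lemma prime_dvd_if_factor_dvd_frobenius:
  fixes F G :: "int poly"
  assumes FG: "monom 1 N - 1 = F * G" and N: "N > 0"
    and mon: "lead_coeff F = 1" and dF: "degree F > 0"
    and q: "prime q" and dv: "F dvd pcompose G (monom 1 q)"
  shows "q dvd N"
proof -
  obtain U where U: "pcompose G (monom 1 q) = F * U" using dv by (elim dvdE)
  obtain H where H: "G ^ q = pcompose G (monom 1 q) + smult (int q) H"
    using int_poly_power_prime[OF q] by blast
  define A where "A = [:0,1:] * pderiv F"
  define B where "B = [:0,1:] * pderiv G - smult (of_nat N) G"
  have NGF: "[:of_nat N:] = G * A + F * B"
    using unity_poly_factor_identity[OF FG N] by (simp add: A_def B_def)
  obtain C where C: "(G * A + F * B) ^ q = (G * A) ^ q + (F * B) * C"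
    using power_add_eq_power_plus_multiple by blast
  have "[:of_nat N ^ q:] = [:of_nat N:] ^ q" by (simp add: poly_const_pow)
  also have "\<dots> = (F * U + smult (int q) H) * A ^ q + (F * B) * C"
    by (simp only: NGF C power_mult_distrib H U)
  finally have E: "[:of_nat N ^ q:] = F * (U * A ^ q + B * C) + smult (int q) (H * A ^ q)"
    by (simp add: algebra_simps)
  obtain S R where SR: "H * A ^ q = F * S + R" "R = 0 \<or> degree R < degree F"
    using monic_int_poly_divmod[OF mon] by blast
  define W where "W = U * A ^ q + B * C + smult (int q) S"
  have E2: "[:of_nat N ^ q:] - smult (int q) R = F * W"
    using E SR by (simp add: W_def algebra_simps smult_add_right)
  have "degree ([:of_nat N ^ q:] - smult (int q) R) \<le> max 0 (degree (smult (int q) R))"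
    using degree_diff_le_max[of "[:int N ^ q:]" "smult (int q) R"] by simp
  also have "\<dots> \<le> degree R" by (simp add: degree_smult_le)
  finally have deg: "degree ([:of_nat N ^ q:] - smult (int q) R) < degree F" using SR(2) dF by auto
  have "W = 0"
  proof (rule ccontr)
    assume "W \<noteq> 0"
    moreover have "F \<noteq> 0" using mon by auto
    ultimately have "degree F \<le> degree (F * W)" by (simp add: degree_mult_eq)
    then show False using E2 deg by simp
  qed
  then have "coeff ([:of_nat N ^ q:] - smult (int q) R) 0 = 0" using E2 by simp
  then have "int q dvd int N ^ q" by simp
  then have "q dvd N ^ q" by (metis of_nat_dvd_iff of_nat_power)
  then show ?thesis using q prime_dvd_power by blast
qed

lemma cyclotomic_conjugate_prime_power:
  fixes P :: "rat poly" and \<gamma> :: complex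
  assumes irr: "irreducible P" and mon: "lead_coeff P = 1"
    and dv: "P dvd (monom 1 N - 1)" and N: "N > 0"
    and root: "poly (of_rat_poly P) \<gamma> = 0" and q: "prime q" "\<not> q dvd N"
  shows "poly (of_rat_poly P) (\<gamma> ^ q) = 0"
proof (rule ccontr)
  assume nz: "poly (of_rat_poly P) (\<gamma> ^ q) \<noteq> 0"
  define h :: "int poly" where "h = monom 1 N - 1"
  have mh: "lead_coeff h = 1"
    using degree_monom_minus_const[OF N, of "1::int"] N by (cases N) (simp_all add: h_def one_pCons)
  have h_eq: "rat_of_int_poly h = monom 1 N - 1" by (simp add: h_def)
  obtain Q where "monom 1 N - 1 = P * Q" using dv by (elim dvdE)
  then obtain F where F: "P = rat_of_int_poly F" "lead_coeff F = 1"
    using monic_rat_factor_of_monic_int_poly[of P Q h] h_eq mon mh by metis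
  have "F dvd h" using F dv h_eq by (intro monic_int_poly_dvd_if_rat_dvd) simp_all
  then obtain G where hG: "h = F * G" by (elim dvdE)
  have ev: "poly (of_rat_poly (rat_of_int_poly h)) z = z ^ N - 1" for z
    by (simp add: h_def poly_monom)
  have "poly (of_rat_poly (rat_of_int_poly h)) \<gamma> = 0" using root F hG by simp
  then have "\<gamma> ^ N = 1" using ev by simp
  then have "poly (of_rat_poly (rat_of_int_poly h)) (\<gamma> ^ q) = 0"
    using ev by (simp add: mult.commute flip: power_mult) (simp add: power_mult)
  then have "poly (of_rat_poly (rat_of_int_poly G)) (\<gamma> ^ q) = 0" using hG nz F by simp
  then have "poly (of_rat_poly (rat_of_int_poly (pcompose G (monom 1 q)))) \<gamma> = 0"
    by (simp add: poly_pcompose poly_monom)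
  then have "rat_of_int_poly F dvd rat_of_int_poly (pcompose G (monom 1 q))"
    using irreducible_root_dvd_iff[OF irr root] F(1) by blast
  then have "F dvd pcompose G (monom 1 q)" by (rule monic_int_poly_dvd_if_rat_dvd[OF F(2)])
  moreover have "degree F > 0" using irreducible_degree_pos[OF irr] F by simp
  ultimately have "q dvd N"
    using hG F(2) N q(1) by (intro prime_dvd_if_factor_dvd_frobenius[of N F G]) (simp_all add: h_def)
  then show False using q(2) by simp
qed

lemma cyclotomic_conjugate_coprime_power:
  fixes P :: "rat poly" and \<gamma> :: complex
  assumes irr: "irreducible P" and mon: "lead_coeff P = 1"
    and dv: "P dvd (monom 1 N - 1)" and N: "N > 0"
    and root: "poly (of_rat_poly P) \<gamma> = 0" and cop: "coprime t N"
  shows "poly (of_rat_poly P) (\<gamma> ^ t) = 0"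
  using cop
proof (induction t rule: less_induct)
  case (less t)
  consider "t = 0" | "t = 1" | "t > 1" by linarith
  then show ?case
  proof cases
    case 1
    then have "N = 1" using less.prems by simp
    obtain k where "monom 1 N - 1 = P * k" using dv by (elim dvdE)
    then have "poly (of_rat_poly (monom 1 N - 1)) \<gamma> = 0" using root by simp
    then have "\<gamma> = 1" using \<open>N = 1\<close> by (simp add: poly_monom)
    then show ?thesis using root 1 by simp
  next
    case 2
    then show ?thesis using root by simp
  next
    case 3
    then obtain q where q: "prime q" "q dvd t" using prime_factor_nat[of t] by auto
    obtain t' where t': "t = q * t'" using q(2) by (elim dvdE)
    have "t' < t" using t' 3 prime_gt_1_nat[OF q(1)] by (cases "t' = 0") auto
    moreover have "coprime t' N" using less.prems t' by simp
    ultimately have "poly (of_rat_poly P) (\<gamma> ^ t') = 0" using less.IH by blast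
    moreover have "\<not> q dvd N"
      using coprime_common_divisor[OF less.prems q(2)] q(1) not_prime_unit by blast
    ultimately have "poly (of_rat_poly P) ((\<gamma> ^ t') ^ q) = 0"
      by (rule cyclotomic_conjugate_prime_power[OF irr mon dv N _ q(1)])
    then show ?thesis using t' by (simp add: power_mult[symmetric] mult.commute)
  qed
qed

lemma exists_coprime_shift:
  fixes p m :: nat
  assumes p: "prime p" "p \<noteq> 2" and m: "m > 0"
  obtains u where "u = 1 \<or> u = 2" "coprime (1 + m * u) (p * m)" "\<not> p * m dvd m * u"
proof -
  have p2: "p > 2" using p prime_ge_2_nat[OF p(1)] by simp
  have ndv: "\<not> p * m dvd m * u" if "u = 1 \<or> u = 2" for u
  proof
    assume "p * m dvd m * u"
    then have "p dvd u" using m by (simp add: mult.commute)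
    then show False using that p2 by (auto dest: dvd_imp_le)
  qed
  have cm: "coprime (1 + m * u) m" for u
  proof (rule coprimeI)
    fix d assume d: "d dvd 1 + m * u" "d dvd m"
    then have "d dvd (1 + m * u) - m * u" by (intro dvd_diff_nat) simp_all
    then show "is_unit d" by simp
  qed
  have cop: "coprime (1 + m * u) (p * m)" if "\<not> p dvd 1 + m * u" for u
    using prime_imp_coprime[OF p(1) that] cm by (simp add: coprime_commute)
  show thesis
  proof (cases "p dvd 1 + m * 1")
    case False
    then show thesis using that cop ndv by blast
  next
    case True
    have "\<not> p dvd 1 + m * 2"
    proof
      assume "p dvd 1 + m * 2"
      then have "p dvd (1 + m * 2) - (1 + m * 1)" using True by (rule dvd_diff_nat)
      then have "p dvd (1 + m * 1) - m" using True by (intro dvd_diff_nat) auto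
      then show False using p(1) by simp
    qed
    then show thesis using that cop ndv by blast
  qed
qed

text \<open>If \<open>\<epsilon> = h(\<epsilon>\<^sup>p)\<close> then \<open>h(x\<^sup>p) - x\<close> also vanishes at the conjugate \<open>\<epsilon>\<^sup>t\<close>, \<open>t = 1 + m u\<close>;
  but \<open>(\<epsilon>\<^sup>t)\<^sup>p = \<epsilon>\<^sup>p\<close>, so \<open>\<epsilon>\<^sup>t = \<epsilon>\<close>, which is false.\<close>

lemma primitive_root_not_in_Q_adjoin_prime_power:
  assumes prim: "primitive_root N \<epsilon>" and N: "N = p * m" "m > 0"
    and p: "prime p" "p \<noteq> 2"
  shows "\<epsilon> \<notin> Q_adjoin (\<epsilon> ^ p)"
proof
  assume "\<epsilon> \<in> Q_adjoin (\<epsilon> ^ p)"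
  then obtain h where h: "\<epsilon> = poly (of_rat_poly h) (\<epsilon> ^ p)" by (rule Q_adjoinE)
  have N0: "N > 0" using N p prime_gt_0_nat by simp
  have eN: "\<epsilon> ^ N = 1" using prim by (simp add: primitive_root_def)
  note alg = root_of_unity_algebraic[OF eN N0]
  note P = min_poly_irreducible[OF alg] min_poly_props(2,3)[OF alg]
  have dvd: "min_poly \<epsilon> dvd monom 1 N - 1" using eN by (intro min_poly_dvd[OF alg]) (simp add: poly_monom)
  define H where "H = pcompose h (monom 1 p) - [:0, 1:]"
  have evH: "poly (of_rat_poly H) z = poly (of_rat_poly h) (z ^ p) - z" for z
    by (simp add: H_def poly_pcompose poly_monom)
  obtain u where u: "u = 1 \<or> u = 2" "coprime (1 + m * u) N" "\<not> N dvd m * u"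
    using exists_coprime_shift[OF p N(2)] N(1) by metis
  define t where "t = 1 + m * u"
  have "poly (of_rat_poly (min_poly \<epsilon>)) (\<epsilon> ^ t) = 0"
    using cyclotomic_conjugate_coprime_power[OF P(1,2) dvd N0 P(3)] u(2) unfolding t_def by blast
  moreover have "poly (of_rat_poly H) \<epsilon> = 0" using evH h by simp
  ultimately have "poly (of_rat_poly H) (\<epsilon> ^ t) = 0" by (rule conjugate_root[OF P(1,3)])
  moreover have "(\<epsilon> ^ t) ^ p = \<epsilon> ^ p"
  proof -
    have tp: "t * p = p + N * u" by (simp add: t_def N(1) algebra_simps)
    have "(\<epsilon> ^ t) ^ p = \<epsilon> ^ (t * p)" by (simp add: power_mult)
    also have "\<dots> = \<epsilon> ^ p * (\<epsilon> ^ N) ^ u" by (simp only: tp power_add power_mult)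
    finally show ?thesis using eN by simp
  qed
  ultimately have "\<epsilon> ^ t = \<epsilon>" using evH h by simp
  then have "\<epsilon> * \<epsilon> ^ (m * u) = \<epsilon> * 1" by (simp add: t_def power_add)
  then have "\<epsilon> ^ (m * u) = 1" using primitive_root_nonzero[OF prim N0] by simp
  then show False using u(3) prim N0 by (simp add: primitive_root_iff)
qed

lemma primitive_root_power_in_Q_adjoin_power:
  assumes prim: "primitive_root n \<zeta>" and odd: "odd n" and l: "l dvd n"
    and k: "\<zeta> ^ k \<in> Q_adjoin (\<zeta> ^ l)"
  shows "l dvd k"
proof (rule ccontr)
  assume nd: "\<not> l dvd k"
  have n0: "n > 0" using odd by presburger
  have l0: "l > 0" using l n0 by (cases l) auto
  define \<omega> where "\<omega> = \<zeta> ^ l"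
  have "\<omega> ^ n = 1" using primitive_root_power_root_of_unity[OF prim] by (simp add: \<omega>_def)
  then have K: "subfield_C (Q_adjoin \<omega>)" using n0 by (intro algebraic_Q_adjoin_subfield root_of_unity_algebraic)
  define g where "g = gcd k l"
  have "\<zeta> ^ g \<in> Q_adjoin \<omega>"
    unfolding g_def using k primitive_root_nonzero[OF prim n0]
    by (intro subfield_C_power_gcd[OF K]) (auto simp: \<omega>_def)
  have "g dvd l" by (simp add: g_def)
  moreover have "g \<noteq> l" using nd gcd_dvd1[of k l] unfolding g_def by metis
  ultimately obtain r where lgr: "l = g * r" and "r \<noteq> 1" by auto
  then obtain p where p: "prime p" "p dvd r" using prime_factor_nat by blast
  then obtain s where s: "l = s * p" "g dvd s" using lgr by (auto simp: mult.assoc)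
  obtain j where "s = g * j" using s(2) by (elim dvdE)
  then have "\<zeta> ^ s \<in> Q_adjoin \<omega>"
    using subfield_C_power[OF K \<open>\<zeta> ^ g \<in> Q_adjoin \<omega>\<close>, of j] by (simp add: power_mult)
  moreover have "primitive_root (p * (n div l)) (\<zeta> ^ s)"
    using l s(1) n0 by (intro primitive_root_power[OF prim]) (auto simp: mult.assoc)
  moreover have "(\<zeta> ^ s) ^ p = \<omega>" by (simp add: \<omega>_def s(1) power_mult)
  moreover have "p \<noteq> 2" using odd l s(1) by auto
  moreover have "n div l > 0" using l l0 n0 by auto
  ultimately show False
    using primitive_root_not_in_Q_adjoin_prime_power[OF _ refl _ p(1)] by metis
qed

section \<open>Radicals stay independent over cyclotomic fields\<close>

definition poly_over :: "complex set \<Rightarrow> complex poly \<Rightarrow> bool" where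
  "poly_over F p \<longleftrightarrow> (\<forall>i. coeff p i \<in> F)"

lemma poly_over_0: "subfield_C F \<Longrightarrow> poly_over F 0"
  and poly_over_add: "subfield_C F \<Longrightarrow> poly_over F p \<Longrightarrow> poly_over F q \<Longrightarrow> poly_over F (p + q)"
  and poly_over_diff: "subfield_C F \<Longrightarrow> poly_over F p \<Longrightarrow> poly_over F q \<Longrightarrow> poly_over F (p - q)"
  and poly_over_smult: "subfield_C F \<Longrightarrow> c \<in> F \<Longrightarrow> poly_over F p \<Longrightarrow> poly_over F (smult c p)"
  and poly_over_monom: "subfield_C F \<Longrightarrow> c \<in> F \<Longrightarrow> poly_over F (monom c k)"
  and poly_over_of_rat_poly: "subfield_C F \<Longrightarrow> poly_over F (of_rat_poly P)"
  by (simp_all add: poly_over_def subfield_C_zero subfield_C_add subfield_C_diff subfield_C_mult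
      subfield_C_of_rat)

lemma poly_over_mult: "subfield_C F \<Longrightarrow> poly_over F p \<Longrightarrow> poly_over F q \<Longrightarrow> poly_over F (p * q)"
  unfolding poly_over_def coeff_mult by (auto intro!: subfield_C_sum subfield_C_mult)

lemma poly_over_sum:
  "subfield_C F \<Longrightarrow> (\<And>i. i \<in> A \<Longrightarrow> poly_over F (f i)) \<Longrightarrow> poly_over F (sum f A)"
  by (induction A rule: infinite_finite_induct) (auto intro: poly_over_add poly_over_0)

lemma monic_division_step_degree:
  fixes p g :: "'a :: comm_ring_1 poly"
  assumes g: "lead_coeff g = 1" and deg: "degree g \<le> degree p"
  defines "s \<equiv> monom (lead_coeff p) (degree p - degree g)"
  shows "p - s * g = 0 \<or> degree (p - s * g) < degree p"
proof -
  have "coeff (s * g) ((degree p - degree g) + degree g) = lead_coeff p * lead_coeff g"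
    unfolding s_def by (simp add: coeff_monom_mult)
  then have "coeff (p - s * g) (degree p) = 0" using deg g by simp
  moreover have "degree (s * g) \<le> degree p"
    using deg by (intro order.trans[OF degree_mult_le]) (simp add: s_def degree_monom_le
        order.trans[OF add_le_mono[OF degree_monom_le order.refl]])
  then have "degree (p - s * g) \<le> degree p" by (simp add: degree_diff_le)
  ultimately show ?thesis by (metis le_neq_implies_less leading_coeff_0_iff)
qed

lemma poly_over_divmod_monic:
  assumes F: "subfield_C F" and g: "poly_over F g" "lead_coeff g = 1" and p: "poly_over F p"
  obtains q r where "poly_over F q" "poly_over F r" "p = g * q + r" "r = 0 \<or> degree r < degree g"
  using p
proof (induction "degree p" arbitrary: p thesis rule: less_induct)
  case less
  show ?case
  proof (cases "degree p < degree g")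
    case True
    then show ?thesis using less.prems poly_over_0[OF F] by (intro less.prems(1)[of 0 p]) auto
  next
    case False
    define s where "s = monom (lead_coeff p) (degree p - degree g)"
    have Fs: "poly_over F s"
      using less.prems(2) unfolding s_def by (intro poly_over_monom F) (simp add: poly_over_def)
    have Fp': "poly_over F (p - s * g)" by (intro poly_over_diff poly_over_mult F less.prems(2) Fs g)
    show ?thesis
    proof (cases "p - s * g = 0")
      case True
      then show ?thesis using Fs poly_over_0[OF F] less.prems(1)[of s 0] by (simp add: mult.commute)
    next
      case False
      then have "degree (p - s * g) < degree p"
        using monic_division_step_degree[OF g(2), of p] \<open>\<not> degree p < degree g\<close>
        unfolding s_def by linarith
      then obtain q r where qr: "poly_over F q" "poly_over F r" "p - s * g = g * q + r"
        "r = 0 \<or> degree r < degree g"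
        using less.hyps Fp' by metis
      have "p = g * (q + s) + r" using qr(3) by (simp add: algebra_simps)
      then show ?thesis using qr less.prems(1) poly_over_add[OF F qr(1) Fs] by blast
    qed
  qed
qed

text \<open>Take \<open>g\<close> monic over \<open>F\<close> of least degree with root \<open>a\<close>: the remainder of \<open>X\<close> modulo \<open>g\<close> is
  again a polynomial over \<open>F\<close> with root \<open>a\<close>, hence zero.\<close>

lemma monic_factor_over_subfield:
  assumes F: "subfield_C F" and X: "poly (of_rat_poly X) a = 0"
    and g0: "poly_over F g0" "g0 \<noteq> 0" "poly g0 a = 0"
  obtains g where "poly_over F g" "lead_coeff g = 1" "poly g a = 0" "g dvd of_rat_poly X"
    "0 < degree g" "degree g \<le> degree g0"
proof -
  define S where "S = {g. poly_over F g \<and> g \<noteq> 0 \<and> poly g a = 0}"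
  have "g0 \<in> S" using g0 by (simp add: S_def)
  then obtain g where g: "g \<in> S" and least: "\<And>g'. g' \<in> S \<Longrightarrow> degree g \<le> degree g'"
    using arg_min_nat_lemma[of "\<lambda>g. g \<in> S" g0 degree] by blast
  define g1 where "g1 = smult (inverse (lead_coeff g)) g"
  have "inverse (lead_coeff g) \<in> F" using g F by (simp add: S_def poly_over_def subfield_C_inverse)
  then have g1: "poly_over F g1" "lead_coeff g1 = 1" "poly g1 a = 0" "degree g1 = degree g"
    using g F by (auto simp: g1_def S_def poly_over_smult)
  have "degree g1 \<noteq> 0"
  proof
    assume "degree g1 = 0"
    then obtain c1 where "g1 = [:c1:]" by (elim degree_eq_zeroE)
    then show False using g1(2,3) by simp
  qed
  obtain q r where qr: "poly_over F q" "poly_over F r" "of_rat_poly X = g1 * q + r"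
    "r = 0 \<or> degree r < degree g1"
    using poly_over_divmod_monic[OF F g1(1,2) poly_over_of_rat_poly[OF F]] by blast
  have "r = 0"
  proof (rule ccontr)
    assume "r \<noteq> 0"
    moreover have "poly r a = 0" using arg_cong[OF qr(3), of "\<lambda>p. poly p a"] X g1(3) by simp
    ultimately have "r \<in> S" using qr(2) by (simp add: S_def)
    then show False using least qr(4) g1(4) \<open>r \<noteq> 0\<close> by fastforce
  qed
  then have "g1 dvd of_rat_poly X" using qr(3) by simp
  then show thesis
    using that g1 \<open>degree g1 \<noteq> 0\<close> least[OF \<open>g0 \<in> S\<close>] by simp
qed

lemma const_coeff_of_monic_factor_binomial:
  fixes g :: "complex poly"
  assumes dv: "g dvd monom 1 n - [:w:]" and mon: "lead_coeff g = 1" and n: "odd n"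
  shows "coeff g 0 ^ n = (- w) ^ degree g"
proof -
  define M where "M = proots g"
  have g0: "g \<noteq> 0" using mon by auto
  have roots: "(- x) ^ n = - w" if "x \<in># M" for x
  proof -
    obtain k where "monom 1 n - [:w:] = g * k" using dv by (elim dvdE)
    moreover have "poly g x = 0" using that g0 by (simp add: M_def)
    ultimately have "poly (monom 1 n - [:w:]) x = 0" by (metis mult_eq_0_iff poly_mult)
    then show ?thesis using n by (simp add: poly_monom)
  qed
  have g_eq: "g = (\<Prod>x\<in>#M. [:- x, 1:])"
    using complex_poly_decompose_multiset[of g] mon by (simp add: M_def)
  have "coeff g 0 = poly g 0" by (simp add: poly_0_coeff_0)
  also have "\<dots> = (\<Prod>x\<in>#M. - x)" by (subst g_eq) (simp add: poly_prod_mset)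
  finally have "coeff g 0 = (\<Prod>x\<in>#M. - x)" .
  moreover have pw: "(\<Prod>x\<in>#A. f x) ^ n = (\<Prod>x\<in>#A. f x ^ n)" for A and f :: "complex \<Rightarrow> complex"
    by (induction A) (simp_all add: power_mult_distrib)
  ultimately have "coeff g 0 ^ n = (\<Prod>x\<in>#M. (- x) ^ n)" by (simp only: pw)
  also have "\<dots> = (\<Prod>x\<in>#M. - w)" using roots by (intro arg_cong[where f = prod_mset] image_mset_cong) simp
  also have "\<dots> = (- w) ^ degree g" by (simp add: M_def size_proots_complex)
  finally show ?thesis .
qed

text \<open>The relations \<open>h\<^sup>k = b\<^sup>k\<close> and \<open>h(x) = h(x\<^sup>n\<^sup>-\<^sup>1)\<close> hold at \<open>\<zeta>\<close> (the latter because
  \<open>\<zeta>\<^sup>n\<^sup>-\<^sup>1 = \<zeta>\<^sup>*\<close> and \<open>b\<close> is real), so they hold at the conjugate \<open>z\<close>: \<open>h(z)\<close> is a real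
  \<open>k\<close>-th root of \<open>b\<^sup>k\<close>, i.e. \<open>b\<close>.\<close>

lemma real_cyclotomic_value_at_conjugate:
  assumes n: "\<zeta> ^ n = 1" "n > 0" and z: "poly (of_rat_poly (min_poly \<zeta>)) z = 0"
    and b: "b = poly (of_rat_poly h) \<zeta>" "b \<in> \<real>" and k: "odd k" "b ^ k = of_rat c"
  shows "poly (of_rat_poly h) z = b"
proof -
  note alg = root_of_unity_algebraic[OF n]
  note P = min_poly_irreducible[OF alg] min_poly_props(3)[OF alg]
  have "z ^ n = 1"
    using conjugate_root[OF P z, of "monom 1 n - 1"] n by (simp add: poly_monom)
  have "poly (of_rat_poly (h ^ k - [:c:])) \<zeta> = 0" using b k by simp
  then have "poly (of_rat_poly (h ^ k - [:c:])) z = 0" by (rule conjugate_root[OF P z, rotated])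
  then have wk: "poly (of_rat_poly h) z ^ k = of_rat c" by simp
  have "poly (of_rat_poly (h - pcompose h (monom 1 (n - 1)))) \<zeta> = b - poly (of_rat_poly h) (cnj \<zeta>)"
    using b cnj_root_of_unity[OF n] by (simp add: poly_pcompose poly_monom)
  also have "poly (of_rat_poly h) (cnj \<zeta>) = b"
    using b by (simp add: poly_of_rat_poly_cnj Reals_cnj_iff)
  finally have "poly (of_rat_poly (h - pcompose h (monom 1 (n - 1)))) z = 0"
    by (intro conjugate_root[OF P z]) simp
  then have "poly (of_rat_poly h) z = poly (of_rat_poly h) (cnj z)"
    using cnj_root_of_unity[OF \<open>z ^ n = 1\<close> n(2)] by (simp add: poly_pcompose poly_monom)
  then have "poly (of_rat_poly h) z \<in> \<real>" by (simp add: poly_of_rat_poly_cnj Reals_cnj_iff)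
  then obtain r where r: "poly (of_rat_poly h) z = of_real r" by (elim Reals_cases)
  obtain s where s: "b = of_real s" using b(2) by (elim Reals_cases)
  have "of_real (r ^ k) = (of_real (s ^ k) :: complex)" using wk r s k(2) by simp
  then have "r ^ k = s ^ k" by (simp only: of_real_eq_iff)
  then have "r = s" using odd_real_root_unique[OF k(1)] by metis
  then show ?thesis using r s by simp
qed

lemma real_cyclotomic_element_rational:
  assumes prim: "primitive_root n \<zeta>" and n: "n > 0"
    and b: "b \<in> Q_adjoin \<zeta>" "b \<in> \<real>" and k: "odd k" "b ^ k = of_rat c"
  shows "b \<in> \<rat>"
proof -
  have zn: "\<zeta> ^ n = 1" using prim by (simp add: primitive_root_def)
  note alg = root_of_unity_algebraic[OF zn n]
  define P where "P = min_poly \<zeta>"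
  have P: "P \<noteq> 0" "poly (of_rat_poly P) \<zeta> = 0" "irreducible P"
    using min_poly_props[OF alg] min_poly_irreducible[OF alg] by (simp_all add: P_def)
  obtain h where h: "b = poly (of_rat_poly h) \<zeta>" using b(1) by (rule Q_adjoinE)
  define r where "r = h mod P"
  have "h = P * (h div P) + r" by (simp add: r_def)
  then have "poly (of_rat_poly h) \<zeta> = poly (of_rat_poly (P * (h div P) + r)) \<zeta>" by simp
  then have hb: "b = poly (of_rat_poly r) \<zeta>" using h P(2) by simp
  define D where "D = of_rat_poly r - [:b:]"
  have "{z. poly (of_rat_poly P) z = 0} \<subseteq> {z. poly D z = 0}"
    using real_cyclotomic_value_at_conjugate[OF zn n _ hb b(2) k] by (auto simp: D_def P_def)
  moreover have "degree D < degree P"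
  proof -
    have "degree r < degree P"
      using degree_mod_less[of P h] P(1) irreducible_degree_pos[OF P(3)] by (auto simp: r_def)
    then show ?thesis
      using degree_diff_le_max[of "of_rat_poly r" "[:b:]"] by (simp add: D_def)
  qed
  moreover have "degree P \<le> card {z. poly (of_rat_poly P) z = 0}"
    using zn n by (intro degree_le_card_roots_if_dvd_unity_poly[OF prim n])
      (simp add: P_def min_poly_dvd[OF alg] poly_monom)
  ultimately have "D = 0"
    using card_poly_roots_bound[of D] by (metis card_mono le_less_trans linorder_not_le poly_roots_finite)
  then have "b = of_rat (coeff r 0)" by (metis D_def coeff_of_rat_poly coeff_pCons_0 eq_iff_diff_eq_0)
  then show ?thesis by simp
qed

lemma degree_le_of_rational_power:
  assumes irr: "irreducible X" and root: "poly (of_rat_poly X) a = 0"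
    and e: "e > 0" "a ^ e = of_rat r"
  shows "degree X \<le> e"
proof -
  have "poly (of_rat_poly (monom 1 e - [:r:])) a = 0" using e by (simp add: poly_monom)
  then have "X dvd monom 1 e - [:r:]" using irreducible_root_dvd_iff[OF irr root] by blast
  moreover have "monom 1 e - [:r:] \<noteq> 0" using degree_monom_minus_const[OF e(1), of r] e(1) by auto
  ultimately show ?thesis using dvd_imp_degree_le degree_monom_minus_const[OF e(1)] by metis
qed

text \<open>Up to sign, the constant term \<open>\<beta>\<close> of \<open>g\<close> is a product of \<open>d = degree g\<close> roots of
  \<open>x\<^sup>n - c\<close>, so \<open>|\<beta>| = |a|^d\<close> and \<open>\<beta> \<beta>\<^sup>* = a^(2 d)\<close>.\<close>

lemma radical_even_power_in_subfield:
  assumes F: "subfield_C F" and cnj: "\<And>x. x \<in> F \<Longrightarrow> cnj x \<in> F"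
    and g: "poly_over F g" "lead_coeff g = 1" "g dvd monom 1 n - [:of_rat c:]"
    and odd: "odd n" and a: "a \<in> \<real>" "a ^ n = of_rat c"
  shows "a ^ (2 * degree g) \<in> F"
proof -
  define d where "d = degree g"
  define \<beta> where "\<beta> = coeff g 0"
  have \<beta>F: "\<beta> \<in> F" using g(1) by (simp add: \<beta>_def poly_over_def)
  have "\<beta> ^ n = (- of_rat c) ^ d"
    using const_coeff_of_monic_factor_binomial[OF g(3,2) odd] by (simp add: \<beta>_def d_def)
  then have "cmod \<beta> ^ n = cmod (of_rat c :: complex) ^ d" by (metis norm_minus_cancel norm_power)
  also have "cmod (of_rat c :: complex) = cmod a ^ n" by (simp flip: a(2) add: norm_power)
  also have "(cmod a ^ n) ^ d = (cmod a ^ d) ^ n" by (simp flip: power_mult add: mult.commute)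
  finally have "cmod \<beta> ^ n = (cmod a ^ d) ^ n" .
  then have "cmod \<beta> = cmod a ^ d" by (rule power_eq_imp_eq_base) (use odd in \<open>simp_all add: odd_pos\<close>)
  moreover obtain r where ar: "a = of_real r" using a(1) by (elim Reals_cases)
  ultimately have "(cmod \<beta>)\<^sup>2 = r ^ (2 * d)"
    by (simp flip: power_mult add: mult.commute power_even_abs)
  then have "\<beta> * cnj \<beta> = a ^ (2 * d)"
    by (simp add: ar flip: complex_norm_square of_real_power)
  then show ?thesis using subfield_C_mult[OF F \<beta>F cnj[OF \<beta>F]] by (simp add: d_def)
qed

text \<open>The Kummer-type step: \<open>x\<^sup>n - c\<close> stays irreducible over \<open>\<rat>(\<zeta>)\<close>.  Otherwise a monic factor \<open>g\<close>
  over \<open>\<rat>(\<zeta>)\<close> of degree \<open>0 < d < n\<close> puts \<open>a\<^sup>2\<^sup>d\<close>, hence \<open>a\<^sup>e\<close> for \<open>e = gcd(2d, n) < n\<close>, into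
  \<open>\<rat>(\<zeta>)\<close>; this real element has a rational odd power, so it is rational, which contradicts the
  irreducibility of \<open>x\<^sup>n - c\<close>.\<close>

lemma radical_powers_independent_over_cyclotomic:
  assumes prim: "primitive_root n \<zeta>" and odd: "odd n"
    and irr: "irreducible (monom 1 n - [:c:])" and "c \<noteq> 0" and a: "a \<in> \<real>" "a ^ n = of_rat c"
    and f: "\<And>i. i < n \<Longrightarrow> f i \<in> Q_adjoin \<zeta>" and sum: "(\<Sum>i<n. f i * a ^ i) = 0"
  shows "\<forall>i<n. f i = 0"
proof (rule ccontr)
  assume "\<not> (\<forall>i<n. f i = 0)"
  then obtain i0 where i0: "i0 < n" "f i0 \<noteq> 0" by auto
  have n0: "n > 0" using odd by presburger
  define F where "F = Q_adjoin \<zeta>"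
  define X :: "rat poly" where "X = monom 1 n - [:c:]"
  have zn: "\<zeta> ^ n = 1" using prim by (simp add: primitive_root_def)
  have sfF: "subfield_C F"
    unfolding F_def by (rule algebraic_Q_adjoin_subfield[OF root_of_unity_algebraic[OF zn n0]])
  have rootX: "poly (of_rat_poly X) a = 0" using a by (simp add: X_def poly_monom)
  define g0 where "g0 = (\<Sum>i<n. monom (f i) i)"
  have "poly_over F g0" unfolding g0_def
    by (intro poly_over_sum sfF poly_over_monom) (use f in \<open>auto simp: F_def\<close>)
  moreover have "coeff g0 i0 = f i0" using i0 by (simp add: g0_def coeff_sum)
  then have "g0 \<noteq> 0" using i0 by auto
  moreover have "poly g0 a = 0" using sum by (simp add: g0_def poly_sum poly_monom)
  ultimately obtain g where g: "poly_over F g" "lead_coeff g = 1" "g dvd of_rat_poly X"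
    "0 < degree g" "degree g \<le> degree g0"
    using monic_factor_over_subfield[OF sfF rootX] by metis
  have "degree g0 \<le> n - 1"
    unfolding g0_def by (rule degree_sum_le) (auto intro: order.trans[OF degree_monom_le])
  then have dn: "0 < degree g" "degree g < n" using g(4,5) n0 by simp_all
  have a2d: "a ^ (2 * degree g) \<in> F"
    using g(3) Q_adjoin_root_of_unity_cnj[OF zn n0]
    by (intro radical_even_power_in_subfield[OF sfF _ g(1,2) _ odd a]) (simp_all add: F_def X_def)
  have a0: "a \<noteq> 0" using a(2) \<open>c \<noteq> 0\<close> n0 by (auto simp: power_0_left)
  define e where "e = gcd (2 * degree g) n"
  have "a ^ e \<in> F"
    using subfield_C_power_gcd[OF sfF a0 a2d] a(2) subfield_C_of_rat[OF sfF] by (simp add: e_def)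
  have "odd e" using odd by (auto simp: e_def elim: oddE dest: dvd_trans[OF _ gcd_dvd2])
  then have "e dvd degree g"
    by (metis e_def coprime_dvd_mult_right_iff gcd_dvd1 coprime_right_2_iff_odd)
  have "e > 0" using n0 by (simp add: e_def)
  then have "e < n" using \<open>e dvd degree g\<close> dn by (auto dest: dvd_imp_le)
  obtain k where nk: "n = e * k" unfolding e_def by (rule dvdE[OF gcd_dvd2])
  have "(a ^ e) ^ k = of_rat c" using a(2) by (simp add: nk power_mult)
  moreover have "odd k" using odd nk by simp
  moreover have "a ^ e \<in> \<real>" using a(1) by simp
  ultimately have "a ^ e \<in> \<rat>"
    using real_cyclotomic_element_rational[OF prim n0] \<open>a ^ e \<in> F\<close> by (auto simp: F_def)
  then obtain r where "a ^ e = of_rat r" by (elim Rats_cases)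
  then have "degree X \<le> e" using degree_le_of_rational_power[OF irr[folded X_def] rootX \<open>e > 0\<close>] by simp
  then show False using \<open>e < n\<close> degree_monom_minus_const[OF n0, of c] by (simp add: X_def)
qed

section \<open>Conjugates of \<open>\<rat>(a)\<close> inside \<open>\<rat>(a, \<zeta>\<^sup>l)\<close>\<close>

locale odd_radical =
  fixes n l :: nat and \<zeta> :: complex and c :: rat and a :: complex
  assumes prim: "primitive_root n \<zeta>" and n_odd: "odd n" and n1: "n > 1"
    and irr: "irreducible (monom 1 n - [:c:])" and c0: "c \<noteq> 0"
    and a_real: "a \<in> \<real>" and a_pow: "a ^ n = of_rat c"
    and l_dvd: "l dvd n"
begin

definition m where "m = n div l"
definition \<omega> where "\<omega> = \<zeta> ^ l"
definition radical_poly :: "rat poly" where "radical_poly = monom 1 n - [:c:]"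
abbreviation M where "M \<equiv> gen_field {a, \<omega>}"

lemma n0: "n > 0" using n1 by simp
lemma n_eq: "n = l * m" using l_dvd by (simp add: m_def)
lemma l0: "l > 0" using n_eq n0 by (cases l) simp_all
lemma m0: "m > 0" using n_eq n0 by (cases m) simp_all
lemma m_odd: "odd m" using n_odd n_eq by (metis even_mult_iff)
lemma a_nonzero: "a \<noteq> 0" using a_pow c0 n0 by (auto simp: power_0_left)

lemma prim_omega: "primitive_root m \<omega>"
  unfolding \<omega>_def by (rule primitive_root_power[OF prim n_eq n0])

lemma omega_pow_reduce: "\<omega> ^ k = \<omega> ^ (k mod m)"
proof -
  have "\<omega> ^ k = (\<omega> ^ m) ^ (k div m) * \<omega> ^ (k mod m)" by (simp flip: power_mult power_add)
  then show ?thesis using prim_omega by (simp add: primitive_root_def)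
qed

lemma a_pow_reduce: "a ^ k = of_rat (c ^ (k div n)) * a ^ (k mod n)"
proof -
  have "a ^ k = (a ^ n) ^ (k div n) * a ^ (k mod n)" by (simp flip: power_mult power_add)
  then show ?thesis by (simp add: a_pow of_rat_power)
qed

lemma irreducible_radical_poly: "irreducible radical_poly"
  using irr by (simp add: radical_poly_def)

lemma degree_radical_poly: "degree radical_poly = n"
  by (simp add: radical_poly_def degree_monom_minus_const n0)

lemma radical_poly_root_iff: "poly (of_rat_poly radical_poly) x = 0 \<longleftrightarrow> x ^ n = of_rat c"
  by (simp add: radical_poly_def poly_monom)

lemma radical_poly_root_conjugate: "poly (of_rat_poly radical_poly) (a * \<omega> ^ j) = 0"
proof -
  have "(\<omega> ^ j) ^ n = 1"
    using primitive_root_power_root_of_unity[OF prim, of "l * j"] by (simp add: \<omega>_def power_mult)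
  then show ?thesis by (simp add: radical_poly_root_iff power_mult_distrib a_pow)
qed

lemma radical_poly_root: "poly (of_rat_poly radical_poly) a = 0"
  using radical_poly_root_conjugate[of 0] by simp

lemma radical_roots:
  assumes "x ^ n = of_rat c"
  obtains k where "k < n" "x = a * \<zeta> ^ k"
proof -
  have "(x / a) ^ n = 1" using assms a_pow c0 by (simp add: power_divide)
  then obtain k where "k < n" "x / a = \<zeta> ^ k" using root_of_unity_eq_power[OF prim n0] by blast
  then show thesis using that a_nonzero by (simp add: field_simps)
qed

lemma gen_field_conjugate: "gen_field {a * \<omega> ^ j} = Q_adjoin (a * \<omega> ^ j)"
  by (rule gen_field_singleton[OF irreducible_radical_poly radical_poly_root_conjugate])

lemma gen_field_a: "gen_field {a} = Q_adjoin a"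
  using gen_field_conjugate[of 0] by simp

lemma ext_degree_gen_field_a: "ext_degree (gen_field {a}) = n"
  using ext_degree_Q_adjoin[OF irreducible_radical_poly radical_poly_root]
  by (simp add: gen_field_a degree_radical_poly)

lemma M_subfield: "subfield_C M"
  by (rule gen_field_subfield)

lemma a_in_M: "a \<in> M" and omega_in_M: "\<omega> \<in> M"
  using gen_field_superset[of "{a, \<omega>}"] by auto

lemma conjugate_in_M: "a * \<omega> ^ j \<in> M"
  by (intro subfield_C_mult[OF M_subfield] a_in_M subfield_C_power[OF M_subfield] omega_in_M)

definition M_spanning_set where "M_spanning_set = (\<lambda>(i, j). a ^ i * \<omega> ^ j) ` ({..<n} \<times> {..<m})"

lemma M_spanning_set_mult: "b \<in> M_spanning_set \<Longrightarrow> b' \<in> M_spanning_set \<Longrightarrow> b * b' \<in> Q.span M_spanning_set"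
proof -
  assume "b \<in> M_spanning_set" "b' \<in> M_spanning_set"
  then obtain i j i' j' where b: "b = a ^ i * \<omega> ^ j" and b': "b' = a ^ i' * \<omega> ^ j'"
    by (auto simp: M_spanning_set_def)
  have "b * b' = a ^ (i + i') * \<omega> ^ (j + j')" by (simp add: b b' power_add)
  also have "\<dots> = of_rat (c ^ ((i + i') div n)) * (a ^ ((i + i') mod n) * \<omega> ^ ((j + j') mod m))"
    by (subst a_pow_reduce, subst omega_pow_reduce) simp
  also have "\<dots> \<in> Q.span M_spanning_set"
    by (intro Q.span_scale Q.span_base) (use n0 m0 in \<open>auto simp: M_spanning_set_def\<close>)
  finally show ?thesis .
qed

lemma M_subset_span: "M \<subseteq> Q.span M_spanning_set"
proof (rule gen_field_least)
  have one: "1 \<in> Q.span M_spanning_set"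
    by (rule Q.span_base) (use n0 m0 in \<open>force simp: M_spanning_set_def\<close>)
  show "subfield_C (Q.span M_spanning_set)"
    by (rule span_mult_closed_subfield[OF _ one M_spanning_set_mult]) (simp add: M_spanning_set_def)
  have "a = (\<lambda>(i, j). a ^ i * \<omega> ^ j) (1, 0)" "\<omega> = (\<lambda>(i, j). a ^ i * \<omega> ^ j) (0, 1 mod m)"
    using omega_pow_reduce[of 1] by simp_all
  moreover have "(1, 0) \<in> {..<n} \<times> {..<m}" "(0, 1 mod m) \<in> {..<n} \<times> {..<m}" using n1 m0 by simp_all
  ultimately have "a \<in> M_spanning_set" "\<omega> \<in> M_spanning_set" unfolding M_spanning_set_def by (metis image_eqI)+
  then show "{a, \<omega>} \<subseteq> Q.span M_spanning_set" using Q.span_base by blast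
qed

lemma M_repr:
  assumes "x \<in> M"
  obtains f where "\<And>i. i < n \<Longrightarrow> f i \<in> Q_adjoin \<omega>" "x = (\<Sum>i<n. f i * a ^ i)"
proof -
  have "x \<in> Q.span M_spanning_set" using assms M_subset_span by blast
  then have "\<exists>f. (\<forall>i<n. f i \<in> Q_adjoin \<omega>) \<and> x = (\<Sum>i<n. f i * a ^ i)"
  proof (induction rule: Q.span_induct_alt)
    case base
    then show ?case by (intro exI[of _ "\<lambda>_. 0"]) auto
  next
    case (step q b y)
    obtain f where f: "\<forall>i<n. f i \<in> Q_adjoin \<omega>" "y = (\<Sum>i<n. f i * a ^ i)" using step by blast
    obtain i0 j0 where b: "b = a ^ i0 * \<omega> ^ j0" "i0 < n" using step(1) by (auto simp: M_spanning_set_def)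
    define f' where "f' = (\<lambda>i. f i + (if i = i0 then of_rat q * \<omega> ^ j0 else 0))"
    have "\<forall>i<n. f' i \<in> Q_adjoin \<omega>"
      using f(1) by (auto simp: f'_def intro!: Q_adjoin_add Q_adjoin_mult)
    moreover have "of_rat q * b + y = (\<Sum>i<n. f' i * a ^ i)"
    proof -
      have "(\<Sum>i<n. f' i * a ^ i) =
          (\<Sum>i<n. f i * a ^ i) + (\<Sum>i<n. (if i = i0 then of_rat q * \<omega> ^ j0 else 0) * a ^ i)"
        by (simp add: f'_def algebra_simps sum.distrib)
      also have "(\<Sum>i<n. (if i = i0 then of_rat q * \<omega> ^ j0 else 0) * a ^ i) =
          (\<Sum>i<n. if i = i0 then of_rat q * \<omega> ^ j0 * a ^ i else 0)"
        by (rule sum.cong) auto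
      also have "\<dots> = of_rat q * \<omega> ^ j0 * a ^ i0" using b(2) by simp
      finally show ?thesis using f(2) b(1) by (simp add: mult_ac)
    qed
    ultimately show ?case by blast
  qed
  then show thesis using that by blast
qed

text \<open>By the independence of \<open>1, a, \<dots>, a\<^sup>n\<^sup>-\<^sup>1\<close> over \<open>\<rat>(\<zeta>) \<supseteq> \<rat>(\<omega>)\<close>, comparing the coefficient of
  \<open>a\<close> in \<open>a \<zeta>\<^sup>k = \<Sum> f\<^sub>i a\<^sup>i\<close> gives \<open>\<zeta>\<^sup>k \<in> \<rat>(\<zeta>\<^sup>l)\<close>.\<close>

lemma radical_root_in_M_imp_dvd:
  assumes "a * \<zeta> ^ k \<in> M"
  shows "l dvd k"
proof -
  obtain f where f: "\<And>i. i < n \<Longrightarrow> f i \<in> Q_adjoin \<omega>" "a * \<zeta> ^ k = (\<Sum>i<n. f i * a ^ i)"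
    using M_repr[OF assms] by blast
  define g where "g i = f i - (if i = 1 then \<zeta> ^ k else 0)" for i
  have "(\<Sum>i<n. g i * a ^ i) =
      (\<Sum>i<n. f i * a ^ i) - (\<Sum>i<n. (if i = 1 then \<zeta> ^ k else 0) * a ^ i)"
    by (simp add: g_def algebra_simps sum_subtractf)
  also have "(\<Sum>i<n. (if i = 1 then \<zeta> ^ k else 0) * a ^ i) = (\<Sum>i<n. if i = 1 then \<zeta> ^ k * a ^ i else 0)"
    by (rule sum.cong) auto
  also have "\<dots> = \<zeta> ^ k * a" using n1 by simp
  finally have "(\<Sum>i<n. g i * a ^ i) = 0" using f(2) by (simp add: mult.commute)
  moreover have "g i \<in> Q_adjoin \<zeta>" if "i < n" for i
    using f(1)[OF that] Q_adjoin_power_subset[of \<zeta> l]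
    by (auto simp: g_def \<omega>_def intro!: Q_adjoin_diff)
  ultimately have "g 1 = 0"
    using radical_powers_independent_over_cyclotomic[OF prim n_odd irr c0 a_real a_pow] n1 by blast
  then have "\<zeta> ^ k \<in> Q_adjoin (\<zeta> ^ l)" using f(1)[OF n1] by (simp add: g_def \<omega>_def)
  then show ?thesis by (rule primitive_root_power_in_Q_adjoin_power[OF prim n_odd l_dvd])
qed

lemma radical_roots_in_M: "{x \<in> M. x ^ n = of_rat c} = (\<lambda>j. a * \<omega> ^ j) ` {..<m}"
proof
  show "{x \<in> M. x ^ n = of_rat c} \<subseteq> (\<lambda>j. a * \<omega> ^ j) ` {..<m}"
  proof clarify
    fix x assume x: "x \<in> M" "x ^ n = of_rat c"
    obtain k where k: "k < n" "x = a * \<zeta> ^ k" using x(2) by (rule radical_roots)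
    then obtain j where j: "k = l * j" using x radical_root_in_M_imp_dvd by auto
    then have "l * j < l * m" using k(1) n_eq by simp
    then have "j < m" by simp
    moreover have "x = a * \<omega> ^ j" using k j by (simp add: \<omega>_def power_mult)
    ultimately show "x \<in> (\<lambda>j. a * \<omega> ^ j) ` {..<m}" by auto
  qed
  show "(\<lambda>j. a * \<omega> ^ j) ` {..<m} \<subseteq> {x \<in> M. x ^ n = of_rat c}"
    using conjugate_in_M radical_poly_root_conjugate by (auto simp: radical_poly_root_iff)
qed

lemma card_radical_roots_in_M: "card {x \<in> M. x ^ n = of_rat c} = m"
proof -
  have "inj_on (\<lambda>j. a * \<omega> ^ j) {..<m}"
    using primitive_root_inj_on[OF prim_omega m0] a_nonzero by (auto simp: inj_on_def)
  then show ?thesis by (simp add: radical_roots_in_M card_image)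
qed

lemma root_capacity_M: "root_capacity M (gen_field {a}) = m"
  using root_capacity_eq_card_roots[OF irreducible_radical_poly radical_poly_root M_subfield]
    card_radical_roots_in_M by (simp add: radical_poly_root_iff)

lemma conjugate_fields_in_M:
  "{L'. subfield_C L' \<and> L' \<subseteq> M \<and> iso_over_Q (gen_field {a}) L'} = (\<lambda>j. Q_adjoin (a * \<omega> ^ j)) ` {..<m}"
proof
  show "{L'. subfield_C L' \<and> L' \<subseteq> M \<and> iso_over_Q (gen_field {a}) L'} \<subseteq> (\<lambda>j. Q_adjoin (a * \<omega> ^ j)) ` {..<m}"
  proof clarify
    fix L' assume L': "L' \<subseteq> M" "iso_over_Q (gen_field {a}) L'"
    obtain \<beta> where \<beta>: "L' = Q_adjoin \<beta>"
      and roots: "\<And>p. poly (of_rat_poly p) a = 0 \<Longrightarrow> poly (of_rat_poly p) \<beta> = 0"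
      using L'(2) unfolding gen_field_a by (rule iso_over_Q_Q_adjoinE) blast
    have "\<beta> \<in> {x \<in> M. x ^ n = of_rat c}"
      using L'(1) \<beta> roots[OF radical_poly_root] by (auto simp: radical_poly_root_iff)
    then show "L' \<in> (\<lambda>j. Q_adjoin (a * \<omega> ^ j)) ` {..<m}" unfolding radical_roots_in_M \<beta> by blast
  qed
  show "(\<lambda>j. Q_adjoin (a * \<omega> ^ j)) ` {..<m} \<subseteq> {L'. subfield_C L' \<and> L' \<subseteq> M \<and> iso_over_Q (gen_field {a}) L'}"
    using Q_adjoin_subfield[OF irreducible_radical_poly radical_poly_root_conjugate]
      Q_adjoin_subset_subfield[OF M_subfield conjugate_in_M]
      iso_over_Q_conjugates[OF irreducible_radical_poly radical_poly_root radical_poly_root_conjugate]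
    by (auto simp: gen_field_a)
qed

definition span_am where "span_am = Q.span ((\<lambda>i. a ^ (m * i)) ` {..<l})"

lemma span_am_subset_conjugate: "span_am \<subseteq> Q_adjoin (a * \<omega> ^ j)"
  unfolding span_am_def
proof (rule subfield_C_span)
  show "subfield_C (Q_adjoin (a * \<omega> ^ j))"
    by (rule Q_adjoin_subfield[OF irreducible_radical_poly radical_poly_root_conjugate])
  have "(a * \<omega> ^ j) ^ (m * i) = a ^ (m * i)" for i
  proof -
    have "(\<omega> ^ j) ^ (m * i) = (\<omega> ^ m) ^ (j * i)" by (simp flip: power_mult add: mult_ac)
    then show ?thesis using prim_omega by (simp add: power_mult_distrib primitive_root_def)
  qed
  then show "(\<lambda>i. a ^ (m * i)) ` {..<l} \<subseteq> Q_adjoin (a * \<omega> ^ j)" by (metis Q_adjoin_power image_subsetI)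
qed

lemma expansion_coeff_nonzero_imp_m_dvd:
  assumes eq: "(\<Sum>i<n. of_rat (q i) * a ^ i) = (\<Sum>i<n. of_rat (r i) * (a * \<omega>) ^ i)"
    and i: "i < n" "q i \<noteq> 0"
  shows "m dvd i"
proof -
  define f where "f i = of_rat (q i) - of_rat (r i) * \<omega> ^ i" for i
  have "f i \<in> Q_adjoin \<zeta>" for i
    unfolding f_def \<omega>_def
    by (intro Q_adjoin_diff Q_adjoin_mult Q_adjoin_of_rat) (simp add: Q_adjoin_power flip: power_mult)
  moreover have "(\<Sum>i<n. f i * a ^ i) = 0"
    using eq by (simp add: f_def algebra_simps sum_subtractf)
  ultimately have "f i = 0"
    using radical_powers_independent_over_cyclotomic[OF prim n_odd irr c0 a_real a_pow] i(1) by blast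
  then have qr: "of_rat (q i) = of_rat (r i) * \<omega> ^ i" by (simp add: f_def)
  then have "r i \<noteq> 0" using i(2) by auto
  then have \<rho>: "\<omega> ^ i = of_rat (q i / r i)" using qr by (simp add: of_rat_divide)
  have "(of_rat (q i / r i) :: complex) ^ m = 1"
    using primitive_root_power_root_of_unity[OF prim_omega, of i] by (simp only: \<rho>)
  with m_odd have "q i / r i = 1" by (rule rat_root_of_unity_odd)
  then have "\<omega> ^ i = 1" using \<rho> by simp
  then show ?thesis using prim_omega m0 by (simp add: primitive_root_iff)
qed

lemma Inter_conjugates_subset_span_am:
  assumes x: "\<And>j. j < m \<Longrightarrow> x \<in> Q_adjoin (a * \<omega> ^ j)"
  shows "x \<in> span_am"
proof -
  have X0: "radical_poly \<noteq> 0" using irreducible_radical_poly by auto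
  obtain q where q: "x = (\<Sum>i<n. of_rat (q i) * a ^ i)"
    using Q_adjoin_coeffs[OF X0 radical_poly_root] x[OF m0] by (auto simp: degree_radical_poly)
  have "x \<in> Q_adjoin (a * \<omega>)" using x[of "1 mod m"] m0 omega_pow_reduce[of 1] by simp
  then obtain r where r: "x = (\<Sum>i<n. of_rat (r i) * (a * \<omega>) ^ i)"
    using Q_adjoin_coeffs[OF X0 radical_poly_root_conjugate[of 1]] by (auto simp: degree_radical_poly)
  show ?thesis
    unfolding q span_am_def
  proof (rule Q.span_sum)
    fix i assume i: "i \<in> {..<n}"
    show "of_rat (q i) * a ^ i \<in> Q.span ((\<lambda>i. a ^ (m * i)) ` {..<l})"
    proof (cases "q i = 0")
      case False
      then obtain i' where i': "i = m * i'" using expansion_coeff_nonzero_imp_m_dvd[of q r i] q r i by auto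
      then have "m * i' < m * l" using i n_eq by (metis lessThan_iff mult.commute)
      then have "i' < l" by simp
      then have "a ^ i \<in> (\<lambda>i. a ^ (m * i)) ` {..<l}" using i' by auto
      then show ?thesis by (intro Q.span_scale Q.span_base)
    qed (simp add: Q.span_zero)
  qed
qed

lemma ext_degree_span_am: "ext_degree span_am = l"
proof -
  note pw = inj_on_powers_irreducible_root[OF irreducible_radical_poly radical_poly_root]
    independent_powers_irreducible_root[OF irreducible_radical_poly radical_poly_root]
  define B where "B = (\<lambda>i. a ^ (m * i)) ` {..<l}"
  have mi: "m * i < n" if "i < l" for i using that m0 n_eq by (metis mult.commute mult_strict_left_mono)
  then have "B \<subseteq> (\<lambda>i. a ^ i) ` {..<degree radical_poly}" by (auto simp: B_def degree_radical_poly)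
  then have "Q.independent B" using pw(2) by (rule Q.independent_mono[rotated])
  moreover have "inj_on (\<lambda>i. a ^ (m * i)) {..<l}"
  proof (rule inj_onI)
    fix i j assume "i \<in> {..<l}" "j \<in> {..<l}" "a ^ (m * i) = a ^ (m * j)"
    then have "m * i = m * j" using pw(1) mi by (auto simp: degree_radical_poly dest: inj_onD)
    then show "i = j" using m0 by simp
  qed
  ultimately show ?thesis
    unfolding span_am_def B_def[symmetric]
    using ext_degree_eq_card[OF _ Q.span_superset order.refl] by (simp add: B_def card_image)
qed

lemma intersection_indicium_M: "intersection_indicium M (gen_field {a}) = l"
proof -
  have "\<Inter> {L'. subfield_C L' \<and> L' \<subseteq> M \<and> iso_over_Q (gen_field {a}) L'} = span_am"
    unfolding conjugate_fields_in_M
    using Inter_conjugates_subset_span_am span_am_subset_conjugate by blast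
  then show ?thesis
    using conjugate_fields_in_M m0 ext_degree_span_am
    by (auto simp: intersection_indicium_def Let_def)
qed

end

theorem mainTheorem15:
  fixes n l :: nat and \<zeta> :: complex and c :: rat
  assumes "odd n" and "n > 2"
    and "\<zeta> ^ n = 1" and "\<forall>k. 0 < k \<and> k < n \<longrightarrow> \<zeta> ^ k \<noteq> 1"
    and "c > 0"
    and "irreducible (monom 1 n - [:c:])"
    and "l > 0" and "l dvd n"
  defines "a \<equiv> complex_of_real (root n (of_rat c))"
  defines "L \<equiv> gen_field {a}"
  defines "M \<equiv> gen_field {a, \<zeta> ^ l}"
  shows "root_capacity M L = n div l \<and> intersection_indicium M L = l \<and>
         intersection_indicium M L * root_capacity M L = ext_degree L"
proof -
  have "a ^ n = of_rat c"
    using real_root_pow_pos[of n "of_rat c"] assms(2,5) by (simp add: a_def flip: of_real_power)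
  moreover have "a \<in> \<real>" by (simp add: a_def)
  ultimately interpret odd_radical n l \<zeta> c a
    using assms(1-8) by unfold_locales (auto simp: primitive_root_def)
  have "root_capacity M L = n div l"
    using root_capacity_M by (simp add: M_def L_def \<omega>_def m_def)
  moreover have "intersection_indicium M L = l"
    using intersection_indicium_M by (simp add: M_def L_def \<omega>_def)
  moreover have "ext_degree L = n" using ext_degree_gen_field_a by (simp add: L_def)
  moreover have "l * (n div l) = n" using assms(8) by simp
  ultimately show ?thesis by simp
qed

end
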